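(* Let $K$ be the $2$-uniform tiling of the plane whose vertex types are $[3^2,6^2]$ and $[3^1,6^1,3^1,6^1]$. If $X$ is a map on the torus that is a quotient $X=K/\Gamma$ of $K$, then the vertices of $X$ form exactly $2$ orbits under ${\rm Aut}(X)$.
   Context: A map is a polyhedral map: a cellular embedding of a connected graph in a closed surface such that the intersection of any two distinct faces is empty, a single vertex, or a single edge. For a vertex $u$, the faces containing $u$ form a cyclic sequence (the face-cycle at $u$); if this cyclic sequence consists of consecutive blocks of $n_1$ $p_1$-gons, then $n_2$ $p_2$-gons, ..., then $n_k$ $p_k$-gons, with cyclically consecutive $p_i$ distinct, then $u$ is said to have type $[p_1^{n_1},\dots,p_k^{n_k}]$ (defined up to cyclic shift and reversal). A $2$-uniform tiling is an edge-to-edge tiling of the Euclidean plane $\mathbb{R}^2$ by regular polygons whose symmetry group has exactly two orbits on the set of vertices; viewed as a map on the plane, its vertices have (at most) two types, listed as $[W;Z]$. (Up to isomorphism there are exactly $20$ such tilings; there is exactly one with the vertex types named in the claim.) For a map $K$ on the plane, a quotient of $K$ on the torus is a map $X$ on the torus together with a polyhedral covering map $\eta:K\to X$ with $X=K/\Gamma$, where $\Gamma\le {\rm Aut}(K)$ is a subgroup acting without fixed vertices, edges or faces and $K/\Gamma$ is homeomorphic to the torus. ${\rm Aut}(X)$ denotes the automorphism group of the map $X$, acting on its vertex set $V(X)$. *)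

theory Defs
  imports Main
begin

text \<open>A polyhedral map is determined by its vertex set V, its edge set E (2-element vertex sets)
and its face set F (faces given by their vertex sets).\<close>

type_synonym 'v mapdata = "'v set \<times> 'v set set \<times> 'v set set"

definition map_aut :: "'v mapdata \<Rightarrow> ('v \<Rightarrow> 'v) set" where
  "map_aut M = (case M of (V, E, F) \<Rightarrow>
     {f. bij_betw f V V \<and> (\<forall>x. x \<notin> V \<longrightarrow> f x = x) \<and>
         (image f) ` E = E \<and> (image f) ` F = F})"

definition aut_orbit :: "('v \<Rightarrow> 'v) set \<Rightarrow> 'v \<Rightarrow> 'v set" where
  "aut_orbit G x = (\<lambda>g. g x) ` G"

text \<open>Lattice point (a,b) stands for the point a*(1,0) + b*(1/2, sqrt 3/2) of the plane; the
regular triangular tiling has these points as vertices.  The tiling K is obtained by deleting the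
lattice points (a,b) with a - b = 0 mod 4 (the centres of the hexagons): the six triangles around
each deleted point merge into a regular hexagon.  Vertices with a - b = 1,3 mod 4 have type
[3^2,6^2], those with a - b = 2 mod 4 have type [3,6,3,6].\<close>

definition hex_center :: "int \<times> int \<Rightarrow> bool" where
  "hex_center p \<longleftrightarrow> (fst p - snd p) mod 4 = 0"

definition tri_adj :: "int \<times> int \<Rightarrow> int \<times> int \<Rightarrow> bool" where
  "tri_adj p q \<longleftrightarrow> (fst q - fst p, snd q - snd p) \<in>
     {(1,0), (0,1), (-1,1), (-1,0), (0,-1), (1,-1)}"

definition up_tri :: "int \<Rightarrow> int \<Rightarrow> (int \<times> int) set" where
  "up_tri a b = {(a,b), (a+1,b), (a,b+1)}"

definition down_tri :: "int \<Rightarrow> int \<Rightarrow> (int \<times> int) set" where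
  "down_tri a b = {(a+1,b), (a,b+1), (a+1,b+1)}"

definition hexagon :: "int \<times> int \<Rightarrow> (int \<times> int) set" where
  "hexagon p = {q. tri_adj p q}"

definition KV :: "(int \<times> int) set" where
  "KV = {p. \<not> hex_center p}"

definition KE :: "(int \<times> int) set set" where
  "KE = {{p, q} | p q. p \<in> KV \<and> q \<in> KV \<and> tri_adj p q}"

definition KF :: "(int \<times> int) set set" where
  "KF = {T | T a b. (T = up_tri a b \<or> T = down_tri a b) \<and> T \<subseteq> KV}
        \<union> {hexagon p | p. hex_center p}"

definition Ktiling :: "(int \<times> int) mapdata" where
  "Ktiling = (KV, KE, KF)"

text \<open>Orientation of a lattice triangle (positive = counterclockwise in the plane).\<close>

definition orient :: "int \<times> int \<Rightarrow> int \<times> int \<Rightarrow> int \<times> int \<Rightarrow> int" where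
  "orient p q r = (fst q - fst p) * (snd r - snd p) - (snd q - snd p) * (fst r - fst p)"

definition orientation_preserving :: "(int \<times> int \<Rightarrow> int \<times> int) \<Rightarrow> bool" where
  "orientation_preserving g \<longleftrightarrow>
     (\<forall>p q r. {p, q, r} \<in> KF \<and> card {p, q, r} = 3 \<and> orient p q r > 0
        \<longrightarrow> orient (g p) (g q) (g r) > 0)"

definition is_subgroup_aut :: "(int \<times> int \<Rightarrow> int \<times> int) set \<Rightarrow> bool" where
  "is_subgroup_aut \<Gamma> \<longleftrightarrow> \<Gamma> \<subseteq> map_aut Ktiling \<and> id \<in> \<Gamma> \<and>
     (\<forall>g\<in>\<Gamma>. \<forall>h\<in>\<Gamma>. g \<circ> h \<in> \<Gamma>) \<and> (\<forall>g\<in>\<Gamma>. inv g \<in> \<Gamma>)"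

definition acts_freely :: "(int \<times> int \<Rightarrow> int \<times> int) set \<Rightarrow> bool" where
  "acts_freely \<Gamma> \<longleftrightarrow> (\<forall>g\<in>\<Gamma>. g \<noteq> id \<longrightarrow>
     (\<forall>v\<in>KV. g v \<noteq> v) \<and> (\<forall>e\<in>KE. g ` e \<noteq> e) \<and> (\<forall>f\<in>KF. g ` f \<noteq> f))"

definition quotV :: "(int \<times> int \<Rightarrow> int \<times> int) set \<Rightarrow> (int \<times> int) set set" where
  "quotV \<Gamma> = aut_orbit \<Gamma> ` KV"

definition quotE :: "(int \<times> int \<Rightarrow> int \<times> int) set \<Rightarrow> (int \<times> int) set set set" where
  "quotE \<Gamma> = (\<lambda>e. aut_orbit \<Gamma> ` e) ` KE"

definition quotF :: "(int \<times> int \<Rightarrow> int \<times> int) set \<Rightarrow> (int \<times> int) set set set" where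
  "quotF \<Gamma> = (\<lambda>f. aut_orbit \<Gamma> ` f) ` KF"

definition quot_map :: "(int \<times> int \<Rightarrow> int \<times> int) set \<Rightarrow> (int \<times> int) set mapdata" where
  "quot_map \<Gamma> = (quotV \<Gamma>, quotE \<Gamma>, quotF \<Gamma>)"

text \<open>K/Gamma is homeomorphic to the torus: it is a finite (compact) closed surface, orientable
(Gamma preserves the orientation of the plane) and of Euler characteristic 0.\<close>

definition quotient_is_torus :: "(int \<times> int \<Rightarrow> int \<times> int) set \<Rightarrow> bool" where
  "quotient_is_torus \<Gamma> \<longleftrightarrow> finite (quotV \<Gamma>) \<and>
     int (card (quotV \<Gamma>)) - int (card (quotE \<Gamma>)) + int (card (quotF \<Gamma>)) = 0 \<and>
     (\<forall>g\<in>\<Gamma>. orientation_preserving g)"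

text \<open>X = K/Gamma is a polyhedral map and eta is a polyhedral covering: eta is injective on each
face (faces of X are genuine polygons), distinct edge/face orbits have distinct images, and two
distinct faces of X meet in nothing, a single vertex, or a single (common) edge.\<close>

definition quotient_polyhedral :: "(int \<times> int \<Rightarrow> int \<times> int) set \<Rightarrow> bool" where
  "quotient_polyhedral \<Gamma> \<longleftrightarrow>
     (\<forall>f\<in>KF. inj_on (aut_orbit \<Gamma>) f) \<and>
     (\<forall>e1\<in>KE. \<forall>e2\<in>KE. aut_orbit \<Gamma> ` e1 = aut_orbit \<Gamma> ` e2 \<longrightarrow> (\<exists>g\<in>\<Gamma>. g ` e1 = e2)) \<and>
     (\<forall>f1\<in>KF. \<forall>f2\<in>KF. aut_orbit \<Gamma> ` f1 = aut_orbit \<Gamma> ` f2 \<longrightarrow> (\<exists>g\<in>\<Gamma>. g ` f1 = f2)) \<and>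
     (\<forall>f1\<in>KF. \<forall>f2\<in>KF. aut_orbit \<Gamma> ` f1 \<noteq> aut_orbit \<Gamma> ` f2 \<longrightarrow>
        card (aut_orbit \<Gamma> ` f1 \<inter> aut_orbit \<Gamma> ` f2) \<le> 1 \<or>
        (\<exists>e1\<in>KE. \<exists>e2\<in>KE. e1 \<subseteq> f1 \<and> e2 \<subseteq> f2 \<and>
           aut_orbit \<Gamma> ` e1 = aut_orbit \<Gamma> ` f1 \<inter> aut_orbit \<Gamma> ` f2 \<and>
           aut_orbit \<Gamma> ` e2 = aut_orbit \<Gamma> ` f1 \<inter> aut_orbit \<Gamma> ` f2))"

end

(*
  The tiling is modelled on the triangular lattice: the hexagons are centred at the lattice
  points L = {(a, b). a = b mod 4}, and the vertices of type [3,6,3,6] are those with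
  a - b = 2 mod 4.  These are recognised combinatorially as the vertices all of whose edges lie
  in a triangle, so every automorphism of K preserves the two vertex types.  An automorphism
  fixing one triangle pointwise is the identity; hence the orientation-preserving automorphisms
  of K are the translations by L and the half-turns about the points of L/2, and every half-turn
  fixes a vertex, an edge or a face.  So Gamma is a group of translations, and the translations
  by L as well as the half-turn about the origin normalise Gamma.  They induce automorphisms of
  X = K/Gamma which act transitively on each of the two vertex types of X.
  The types stay apart in X: a vertex of type [3^2,6^2] lies on an edge of X shared by two
  triangles, while a vertex of type [3,6,3,6] does not.  The latter needs that Gamma moves no
  vertex of a hexagon to another vertex of it, which keeps the short vectors (1,1) and (2,-2)
  out of the translation lattice of Gamma.
*)
theory Submission
  imports Defs "HOL-Library.Product_Plus"
begin

section \<open>Automorphisms of maps\<close>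

lemma map_aut_iff:
  "f \<in> map_aut (V, E, F) \<longleftrightarrow> bij_betw f V V \<and> (\<forall>x. x \<notin> V \<longrightarrow> f x = x) \<and>
     image f ` E = E \<and> image f ` F = F"
  by (simp add: map_aut_def)

lemma map_aut_id: "id \<in> map_aut (V, E, F)"
  by (simp add: map_aut_iff)

lemma map_aut_comp:
  assumes "f \<in> map_aut (V, E, F)" and "g \<in> map_aut (V, E, F)"
  shows "f \<circ> g \<in> map_aut (V, E, F)"
proof -
  have "image (f \<circ> g) ` S = image f ` image g ` S" for S :: "'a set set"
    by (simp add: image_comp)
  then show ?thesis
    using assms by (auto simp: map_aut_iff intro: bij_betw_trans)
qed

lemma map_aut_inj:
  assumes "f \<in> map_aut (V, E, F)"
  shows "inj f"
proof (rule injI)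
  fix x y assume "f x = f y"
  moreover have "inj_on f V" "f ` V = V" "\<And>z. z \<notin> V \<Longrightarrow> f z = z"
    using assms by (auto simp: map_aut_iff bij_betw_def)
  ultimately show "x = y"
    by (metis image_eqI inj_onD)
qed

lemma map_aut_vertex: "f \<in> map_aut (V, E, F) \<Longrightarrow> x \<in> V \<Longrightarrow> f x \<in> V"
  by (auto simp: map_aut_iff bij_betw_def)

lemma map_aut_outside: "f \<in> map_aut (V, E, F) \<Longrightarrow> x \<notin> V \<Longrightarrow> f x = x"
  by (simp add: map_aut_iff)

lemma map_aut_edges: "f \<in> map_aut (V, E, F) \<Longrightarrow> image f ` E = E"
  by (simp add: map_aut_iff)

lemma map_aut_faces: "f \<in> map_aut (V, E, F) \<Longrightarrow> image f ` F = F"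
  by (simp add: map_aut_iff)

lemma map_aut_by_inverse:
  assumes "\<And>x. x \<in> V \<Longrightarrow> f x \<in> V" "\<And>x. x \<in> V \<Longrightarrow> g x \<in> V"
    and "\<And>x. f (g x) = x" "\<And>x. g (f x) = x" "\<And>x. x \<notin> V \<Longrightarrow> f x = x"
    and "\<And>e. e \<in> E \<Longrightarrow> f ` e \<in> E" "\<And>e. e \<in> E \<Longrightarrow> g ` e \<in> E"
    and "\<And>s. s \<in> F \<Longrightarrow> f ` s \<in> F" "\<And>s. s \<in> F \<Longrightarrow> g ` s \<in> F"
  shows "f \<in> map_aut (V, E, F)"
proof -
  have onto: "image f ` S = S"
    if "\<And>s. s \<in> S \<Longrightarrow> f ` s \<in> S" "\<And>s. s \<in> S \<Longrightarrow> g ` s \<in> S" for S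
  proof
    show "image f ` S \<subseteq> S" using that(1) by blast
    show "S \<subseteq> image f ` S"
    proof
      fix s assume "s \<in> S"
      moreover have "s = f ` g ` s" using assms(3) by (simp add: image_image)
      ultimately show "s \<in> image f ` S" using that(2) by blast
    qed
  qed
  have "bij_betw f V V"
    by (rule bij_betw_byWitness[where f'=g]) (auto simp: assms(1-4))
  then show ?thesis
    using assms(5-9) onto[of E] onto[of F] by (simp add: map_aut_iff)
qed

lemma map_aut_fix_adjacent_face:
  assumes f: "f \<in> map_aut (V, E, F)"
    and only: "{G \<in> F. p \<in> G \<and> q \<in> G} \<subseteq> {F1, F2}"
    and "f p = p" "f q = q" "F1 \<in> F" "f ` F1 = F1" "F2 \<in> F" "p \<in> F2" "q \<in> F2"
    and "z \<in> F2" "z \<notin> F1"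
  shows "f ` F2 = F2"
proof -
  have "f ` F2 \<in> F" using map_aut_faces[OF f] \<open>F2 \<in> F\<close> by blast
  moreover have "p \<in> f ` F2" "q \<in> f ` F2"
    using assms(3,4,8,9) by (metis imageI)+
  moreover have "f ` F2 \<noteq> f ` F1"
    using assms(10,11) inj_image_eq_iff[OF map_aut_inj[OF f]] by blast
  ultimately show ?thesis using only \<open>f ` F1 = F1\<close> by blast
qed

lemma inj_fix_third_vertex:
  assumes "inj f" "f ` T = T" "T \<subseteq> {p, q, r}" "r \<in> T" "f p = p" "f q = q"
  shows "f r = r"
proof -
  have "f r \<in> {p, q, r}" using assms(2-4) by blast
  then show ?thesis using assms(1,5,6) by (metis empty_iff injD insert_iff)
qed

lemma map_aut_fix_next_vertex:
  assumes f: "f \<in> map_aut (V, E, F)"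
    and only: "{z \<in> H. {y, z} \<in> E} \<subseteq> {x, w}"
    and "f ` H = H" "f x = x" "f y = y" "w \<in> H" "{y, w} \<in> E" "w \<noteq> x"
  shows "f w = w"
proof -
  have "f w \<in> H" using assms(3,6) by blast
  moreover have "{y, f w} = f ` {y, w}" using assms(5) by simp
  then have "{y, f w} \<in> E" using map_aut_edges[OF f] assms(7) by blast
  moreover have "f w \<noteq> x"
    using assms(4,8) map_aut_inj[OF f] by (metis injD)
  ultimately show ?thesis using only by blast
qed

lemma aut_orbit_map_aut_shift:
  assumes f: "f \<in> map_aut (V, E, F)" and h: "h \<in> map_aut (V, E, F)" and "h (f y) = y"
  shows "aut_orbit (map_aut (V, E, F)) (f y) = aut_orbit (map_aut (V, E, F)) y"
proof
  show "aut_orbit (map_aut (V, E, F)) (f y) \<subseteq> aut_orbit (map_aut (V, E, F)) y"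
  proof
    fix z assume "z \<in> aut_orbit (map_aut (V, E, F)) (f y)"
    then obtain g where "g \<in> map_aut (V, E, F)" "z = (g \<circ> f) y" by (auto simp: aut_orbit_def)
    then show "z \<in> aut_orbit (map_aut (V, E, F)) y"
      using map_aut_comp[OF _ f] unfolding aut_orbit_def by blast
  qed
  show "aut_orbit (map_aut (V, E, F)) y \<subseteq> aut_orbit (map_aut (V, E, F)) (f y)"
  proof
    fix z assume "z \<in> aut_orbit (map_aut (V, E, F)) y"
    then obtain g where "g \<in> map_aut (V, E, F)" "z = (g \<circ> h) (f y)"
      using \<open>h (f y) = y\<close> by (auto simp: aut_orbit_def)
    then show "z \<in> aut_orbit (map_aut (V, E, F)) (f y)"
      using map_aut_comp[OF _ h] unfolding aut_orbit_def by blast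
  qed
qed

definition edges_in_triangles :: "'v mapdata \<Rightarrow> 'v \<Rightarrow> bool" where
  "edges_in_triangles M x \<longleftrightarrow> (case M of (V, E, F) \<Rightarrow>
     \<forall>e\<in>E. x \<in> e \<longrightarrow> (\<exists>T\<in>F. card T = 3 \<and> e \<subseteq> T))"

definition on_edge_of_two_triangles :: "'v mapdata \<Rightarrow> 'v \<Rightarrow> bool" where
  "on_edge_of_two_triangles M x \<longleftrightarrow> (case M of (V, E, F) \<Rightarrow>
     \<exists>e\<in>E. x \<in> e \<and> (\<exists>T1\<in>F. \<exists>T2\<in>F. T1 \<noteq> T2 \<and> card T1 = 3 \<and> card T2 = 3 \<and> e \<subseteq> T1 \<and> e \<subseteq> T2))"

lemma map_aut_edges_in_triangles:
  assumes f: "f \<in> map_aut (V, E, F)" and x: "edges_in_triangles (V, E, F) x"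
  shows "edges_in_triangles (V, E, F) (f x)"
  unfolding edges_in_triangles_def prod.case
proof (intro ballI impI)
  fix e assume "e \<in> E" "f x \<in> e"
  then obtain e' where "e' \<in> E" "e = f ` e'" using map_aut_edges[OF f] by blast
  moreover have inj: "inj f" using map_aut_inj[OF f] .
  ultimately have "x \<in> e'" using \<open>f x \<in> e\<close> by (auto simp: inj_image_mem_iff)
  then obtain T where "T \<in> F" "card T = 3" "e' \<subseteq> T"
    using x \<open>e' \<in> E\<close> by (auto simp: edges_in_triangles_def)
  then show "\<exists>T\<in>F. card T = 3 \<and> e \<subseteq> T"
    using map_aut_faces[OF f] \<open>e = f ` e'\<close> inj
    by (intro bexI[of _ "f ` T"]) (auto simp: card_image inj_on_subset)
qed

lemma on_edge_of_two_trianglesI: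
  assumes "e \<in> E" "x \<in> e" "T1 \<in> F" "T2 \<in> F" "T1 \<noteq> T2" "card T1 = 3" "card T2 = 3"
    "e \<subseteq> T1" "e \<subseteq> T2"
  shows "on_edge_of_two_triangles (V, E, F) x"
  unfolding on_edge_of_two_triangles_def prod.case using assms by blast

lemma on_edge_of_two_trianglesE:
  assumes "on_edge_of_two_triangles (V, E, F) x"
  obtains e T1 T2 where "e \<in> E" "x \<in> e" "T1 \<in> F" "T2 \<in> F" "T1 \<noteq> T2"
    "card T1 = 3" "card T2 = 3" "e \<subseteq> T1" "e \<subseteq> T2"
  using assms unfolding on_edge_of_two_triangles_def prod.case by blast

lemma map_aut_on_edge_of_two_triangles:
  assumes f: "f \<in> map_aut (V, E, F)" and x: "on_edge_of_two_triangles (V, E, F) x"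
  shows "on_edge_of_two_triangles (V, E, F) (f x)"
proof -
  have inj: "inj f" using map_aut_inj[OF f] .
  obtain e T1 T2 where e: "e \<in> E" "x \<in> e" and T: "T1 \<in> F" "T2 \<in> F" "T1 \<noteq> T2"
    "card T1 = 3" "card T2 = 3" "e \<subseteq> T1" "e \<subseteq> T2"
    using x by (rule on_edge_of_two_trianglesE)
  show ?thesis
  proof (rule on_edge_of_two_trianglesI)
    show "f ` e \<in> E" "f x \<in> f ` e" using e map_aut_edges[OF f] by blast+
    show "f ` T1 \<in> F" "f ` T2 \<in> F" using T(1,2) map_aut_faces[OF f] by blast+
    show "f ` T1 \<noteq> f ` T2" using T(3) inj by (simp add: inj_image_eq_iff)
    show "card (f ` T1) = 3" "card (f ` T2) = 3"
      using T(4,5) inj by (simp_all add: card_image inj_on_subset)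
    show "f ` e \<subseteq> f ` T1" "f ` e \<subseteq> f ` T2" using T(6,7) by blast+
  qed
qed

section \<open>The tiling\<close>

lemma hex_center_Pair [simp]: "hex_center (a, b) \<longleftrightarrow> (a - b) mod 4 = 0"
  by (simp add: hex_center_def)

lemma KV_Pair [simp]: "(a, b) \<in> KV \<longleftrightarrow> (a - b) mod 4 \<noteq> 0"
  by (simp add: KV_def)

lemma hex_center_add: "hex_center s \<Longrightarrow> hex_center t \<Longrightarrow> hex_center (s + t)"
  by (cases s, cases t) (simp, presburger)

lemma hex_center_diff: "hex_center s \<Longrightarrow> hex_center t \<Longrightarrow> hex_center (s - t)"
  by (cases s, cases t) (simp, presburger)

lemma hex_center_uminus [simp]: "hex_center (- t) \<longleftrightarrow> hex_center t"
  by (cases t) (simp, presburger)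

lemma KV_translate_iff: "hex_center t \<Longrightarrow> p + t \<in> KV \<longleftrightarrow> p \<in> KV"
  by (cases p, cases t) (simp, presburger)

lemma KV_translate_diff_iff: "hex_center t \<Longrightarrow> p - t \<in> KV \<longleftrightarrow> p \<in> KV"
  by (cases p, cases t) (simp, presburger)

lemma KV_half_turn_iff: "hex_center t \<Longrightarrow> t - p \<in> KV \<longleftrightarrow> p \<in> KV"
  by (cases p, cases t) (simp, presburger)

lemma tri_adj_sym: "tri_adj p q \<Longrightarrow> tri_adj q p"
proof -
  have "(- x, - y) \<in> {(1,0), (0,1), (-1,1), (-1,0), (0,-1), (1,-1)}"
    if "(x, y) \<in> {(1,0), (0,1), (-1,1), (-1,0), (0,-1), (1,-1)}" for x y :: int
    using that by auto
  then show "tri_adj p q \<Longrightarrow> tri_adj q p" unfolding tri_adj_def by (metis minus_diff_eq)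
qed

lemma tri_adj_irrefl: "\<not> tri_adj p p"
  by (simp add: tri_adj_def)

lemma tri_adj_translate [simp]: "tri_adj (p + t) (q + t) \<longleftrightarrow> tri_adj p q"
  by (simp add: tri_adj_def)

lemma tri_adj_half_turn [simp]: "tri_adj (t - p) (t - q) \<longleftrightarrow> tri_adj p q"
proof -
  have "tri_adj (t - p) (t - q) \<longleftrightarrow> tri_adj q p"
    unfolding tri_adj_def by (simp add: algebra_simps)
  then show ?thesis using tri_adj_sym by blast
qed

lemma hexagon_Pair:
  "hexagon (a, b) = {(a+1, b), (a, b+1), (a-1, b+1), (a-1, b), (a, b-1), (a+1, b-1)}"
  unfolding hexagon_def tri_adj_def by (rule set_eqI, case_tac x) (simp add: diff_eq_eq ac_simps)

lemma doubleton_in_KE_iff: "{p, q} \<in> KE \<longleftrightarrow> p \<in> KV \<and> q \<in> KV \<and> tri_adj p q"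
proof
  assume "{p, q} \<in> KE"
  then obtain p' q' where "{p, q} = {p', q'}" "p' \<in> KV" "q' \<in> KV" "tri_adj p' q'"
    unfolding KE_def by blast
  then show "p \<in> KV \<and> q \<in> KV \<and> tri_adj p q"
    by (metis doubleton_eq_iff tri_adj_sym)
qed (unfold KE_def, blast)

lemma KE_at_vertex:
  assumes "e \<in> KE" "p \<in> e"
  obtains q where "e = {p, q}" "p \<in> KV" "q \<in> KV" "tri_adj p q"
  using assms unfolding KE_def by (blast dest: tri_adj_sym)

lemma KE_subset_KV: "e \<in> KE \<Longrightarrow> e \<subseteq> KV"
  unfolding KE_def by blast

definition type3636 :: "int \<times> int \<Rightarrow> bool" where
  "type3636 p \<longleftrightarrow> (fst p - snd p) mod 4 = 2"

lemma KF_iff: "F \<in> KF \<longleftrightarrow>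
    (\<exists>a b. type3636 (a, b) \<and> (F = up_tri a b \<or> F = down_tri a b)) \<or>
    (\<exists>a b. hex_center (a, b) \<and> F = hexagon (a, b))"
proof -
  have "up_tri a b \<subseteq> KV \<longleftrightarrow> type3636 (a, b)" for a b
    by (simp add: up_tri_def type3636_def) presburger
  moreover have "down_tri a b \<subseteq> KV \<longleftrightarrow> type3636 (a, b)" for a b
    by (simp add: down_tri_def type3636_def) presburger
  ultimately have triangles: "((F = up_tri a b \<or> F = down_tri a b) \<and> F \<subseteq> KV) \<longleftrightarrow>
      type3636 (a, b) \<and> (F = up_tri a b \<or> F = down_tri a b)" for a b
    by blast
  have "F \<in> KF \<longleftrightarrow> (\<exists>a b. (F = up_tri a b \<or> F = down_tri a b) \<and> F \<subseteq> KV) \<or>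
      (\<exists>p. F = hexagon p \<and> hex_center p)"
    unfolding KF_def by blast
  then show ?thesis
    unfolding triangles split_paired_Ex by blast
qed

lemma KF_cases:
  assumes "F \<in> KF"
  obtains (up) a b where "type3636 (a, b)" "F = up_tri a b"
    | (down) a b where "type3636 (a, b)" "F = down_tri a b"
    | (hexagon) a b where "hex_center (a, b)" "F = hexagon (a, b)"
  using assms unfolding KF_iff by blast

lemma up_tri_KF: "type3636 (a, b) \<Longrightarrow> up_tri a b \<in> KF"
  and down_tri_KF: "type3636 (a, b) \<Longrightarrow> down_tri a b \<in> KF"
  and hexagon_KF: "hex_center c \<Longrightarrow> hexagon c \<in> KF"
  unfolding KF_iff by (blast, blast, cases c, blast)

lemma hexagon_subset_KV: "hex_center c \<Longrightarrow> hexagon c \<subseteq> KV"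
  by (cases c) (simp add: hexagon_Pair, presburger)

lemma KF_subset_KV: "F \<in> KF \<Longrightarrow> F \<subseteq> KV"
  unfolding KF_def using hexagon_subset_KV by blast

lemma card_up_tri [simp]: "card (up_tri a b) = 3"
  and card_down_tri [simp]: "card (down_tri a b) = 3"
  and card_hexagon [simp]: "card (hexagon (a, b)) = 6"
  by (simp_all add: up_tri_def down_tri_def hexagon_Pair)

lemma KF_triangle_cases:
  assumes "T \<in> KF" "card T = 3"
  obtains a b where "type3636 (a, b)" "T = up_tri a b \<or> T = down_tri a b"
  using assms by (cases rule: KF_cases) auto

lemma type3636_edges_in_triangles:
  assumes "type3636 p"
  shows "edges_in_triangles Ktiling p"
  unfolding edges_in_triangles_def Ktiling_def prod.case
proof (intro ballI impI)
  fix e assume "e \<in> KE" "p \<in> e"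
  then obtain q where e: "e = {p, q}" "q \<in> KV" "tri_adj p q" by (rule KE_at_vertex)
  obtain a b where p: "p = (a, b)" by (cases p)
  have "type3636 (a - 1, b - 1)" "type3636 (a, b)" using assms p by (simp_all add: type3636_def)
  moreover have "q \<in> up_tri a b \<or> q \<in> down_tri (a - 1) (b - 1)"
  proof -
    have "q \<in> hexagon (a, b)" using e(3) p by (simp add: hexagon_def)
    then show ?thesis
      using e(2) assms p unfolding hexagon_Pair type3636_def
      by (elim insertE emptyE) (simp_all add: up_tri_def down_tri_def, presburger+)
  qed
  moreover have "p \<in> up_tri a b" "p \<in> down_tri (a - 1) (b - 1)" by (simp_all add: p up_tri_def down_tri_def)
  ultimately show "\<exists>T\<in>KF. card T = 3 \<and> e \<subseteq> T"
    using e(1) up_tri_KF down_tri_KF card_up_tri card_down_tri by blast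
qed

lemma edges_in_triangles_type3636:
  assumes "p \<in> KV" "edges_in_triangles Ktiling p"
  shows "type3636 p"
proof (rule ccontr)
  assume "\<not> type3636 p"
  obtain a b where p: "p = (a, b)" by (cases p)
  have "(a - b) mod 4 = 1 \<or> (a - b) mod 4 = 3"
    using assms(1) \<open>\<not> type3636 p\<close> p by (simp add: type3636_def) presburger
  then consider "(a - b) mod 4 = 1" | "(a - b) mod 4 = 3" by blast
  \<comment> \<open>the edge from p to the nearest vertex of the other [3^2,6^2] class runs between two hexagons\<close>
  then obtain q where q: "q \<in> KV" "tri_adj p q"
    and no_triangle: "\<And>x y. type3636 (x, y) \<Longrightarrow>
      \<not> {p, q} \<subseteq> up_tri x y \<and> \<not> {p, q} \<subseteq> down_tri x y"
  proof cases
    case 1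
    have "\<not> {p, (a - 1, b + 1)} \<subseteq> up_tri x y \<and> \<not> {p, (a - 1, b + 1)} \<subseteq> down_tri x y"
      if "type3636 (x, y)" for x y
      using 1 that unfolding p up_tri_def down_tri_def type3636_def by simp presburger
    then show ?thesis using 1 by (intro that[of "(a - 1, b + 1)"]) (simp_all add: p tri_adj_def, presburger)
  next
    case 2
    have "\<not> {p, (a + 1, b - 1)} \<subseteq> up_tri x y \<and> \<not> {p, (a + 1, b - 1)} \<subseteq> down_tri x y"
      if "type3636 (x, y)" for x y
      using 2 that unfolding p up_tri_def down_tri_def type3636_def by simp presburger
    then show ?thesis using 2 by (intro that[of "(a + 1, b - 1)"]) (simp_all add: p tri_adj_def, presburger)
  qed
  have "{p, q} \<in> KE" using assms(1) q by (simp add: doubleton_in_KE_iff)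
  then obtain T where "T \<in> KF" "card T = 3" "{p, q} \<subseteq> T"
    using assms(2) by (auto simp: edges_in_triangles_def Ktiling_def)
  then obtain x y where "type3636 (x, y)" "T = up_tri x y \<or> T = down_tri x y"
    by (elim KF_triangle_cases)
  then show False using no_triangle[of x y] \<open>{p, q} \<subseteq> T\<close> by blast
qed

lemma aut_K_type3636:
  assumes "f \<in> map_aut Ktiling" "p \<in> KV" "type3636 p"
  shows "type3636 (f p)"
  using assms map_aut_edges_in_triangles[of f KV KE KF p] map_aut_vertex[of f KV KE KF p]
    type3636_edges_in_triangles edges_in_triangles_type3636
  unfolding Ktiling_def by blast

section \<open>Translations and half-turns\<close>

lemma hex_center_multiple:
  assumes "hex_center (s, t)"
  obtains k where "s - t = 4 * k"
  using assms by (auto simp: dvd_eq_mod_eq_0[symmetric] elim: dvdE)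

lemma type3636_translate:
  assumes "hex_center (s, t)"
  shows "type3636 (a + s, b + t) \<longleftrightarrow> type3636 (a, b)"
proof -
  obtain k where "s - t = 4 * k" using assms by (rule hex_center_multiple)
  then have "a + s - (b + t) = (a - b) + 4 * k" by linarith
  then show ?thesis unfolding type3636_def fst_conv snd_conv by (simp only:) simp
qed

lemma type3636_add: "hex_center t \<Longrightarrow> type3636 (p + t) \<longleftrightarrow> type3636 p"
  by (cases p, cases t) (simp add: type3636_translate del: hex_center_Pair)

lemma type3636_half_turn:
  assumes "hex_center (s, t)"
  shows "type3636 (s - a - 1, t - b - 1) \<longleftrightarrow> type3636 (a, b)"
proof -
  obtain k where "s - t = 4 * k" using assms by (rule hex_center_multiple)
  then have "s - a - 1 - (t - b - 1) = (b - a) + 4 * k" by linarith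
  moreover have "(b - a) mod 4 = 2 \<longleftrightarrow> (a - b) mod 4 = 2" by presburger
  ultimately show ?thesis unfolding type3636_def fst_conv snd_conv by (simp only:) simp
qed

lemma translate_up_tri: "(\<lambda>p. p + (s, t)) ` up_tri a b = up_tri (a + s) (b + t)"
  by (simp add: up_tri_def ac_simps)

lemma translate_down_tri: "(\<lambda>p. p + (s, t)) ` down_tri a b = down_tri (a + s) (b + t)"
  by (simp add: down_tri_def ac_simps)

lemma half_turn_up_tri: "(\<lambda>p. (s, t) - p) ` up_tri a b = down_tri (s - a - 1) (t - b - 1)"
  by (simp add: up_tri_def down_tri_def insert_commute algebra_simps)

lemma half_turn_down_tri: "(\<lambda>p. (s, t) - p) ` down_tri a b = up_tri (s - a - 1) (t - b - 1)"
  by (simp add: up_tri_def down_tri_def insert_commute algebra_simps)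

lemma translate_hexagon: "(\<lambda>p. p + t) ` hexagon c = hexagon (c + t)"
proof
  show "(\<lambda>p. p + t) ` hexagon c \<subseteq> hexagon (c + t)" by (auto simp: hexagon_def)
  show "hexagon (c + t) \<subseteq> (\<lambda>p. p + t) ` hexagon c"
  proof
    fix q assume "q \<in> hexagon (c + t)"
    then have "q - t \<in> hexagon c" using tri_adj_translate[of c t "q - t"] by (simp add: hexagon_def)
    then show "q \<in> (\<lambda>p. p + t) ` hexagon c" by (rule rev_image_eqI) simp
  qed
qed

lemma half_turn_hexagon: "(\<lambda>p. s - p) ` hexagon c = hexagon (s - c)"
proof
  show "(\<lambda>p. s - p) ` hexagon c \<subseteq> hexagon (s - c)" by (auto simp: hexagon_def)
  show "hexagon (s - c) \<subseteq> (\<lambda>p. s - p) ` hexagon c"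
  proof
    fix q assume "q \<in> hexagon (s - c)"
    then have "s - q \<in> hexagon c" using tri_adj_half_turn[of s c "s - q"] by (simp add: hexagon_def)
    then show "q \<in> (\<lambda>p. s - p) ` hexagon c" by (rule rev_image_eqI) simp
  qed
qed

lemma KE_translate:
  assumes "hex_center t" "e \<in> KE"
  shows "(\<lambda>p. p + t) ` e \<in> KE"
proof -
  obtain p q where "e = {p, q}" "p \<in> KV" "q \<in> KV" "tri_adj p q"
    using assms(2) unfolding KE_def by blast
  then show ?thesis using assms(1) by (simp add: doubleton_in_KE_iff KV_translate_iff)
qed

lemma KE_half_turn:
  assumes "hex_center c" "e \<in> KE"
  shows "(\<lambda>p. c - p) ` e \<in> KE"
proof -
  obtain p q where "e = {p, q}" "p \<in> KV" "q \<in> KV" "tri_adj p q"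
    using assms(2) unfolding KE_def by blast
  then show ?thesis using assms(1) by (simp add: doubleton_in_KE_iff KV_half_turn_iff)
qed

lemma KF_translate:
  assumes "hex_center t" and "F \<in> KF"
  shows "(\<lambda>p. p + t) ` F \<in> KF"
proof -
  obtain s1 s2 where t: "t = (s1, s2)" by (cases t)
  from \<open>F \<in> KF\<close> show ?thesis
  proof (cases rule: KF_cases)
    case (up a b)
    then show ?thesis using assms(1) by (simp add: t translate_up_tri type3636_translate up_tri_KF)
  next
    case (down a b)
    then show ?thesis using assms(1) by (simp add: t translate_down_tri type3636_translate down_tri_KF)
  next
    case (hexagon a b)
    then show ?thesis using assms(1) by (simp add: translate_hexagon hexagon_KF hex_center_add)
  qed
qed

lemma KF_half_turn:
  assumes "hex_center c" and "F \<in> KF"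
  shows "(\<lambda>p. c - p) ` F \<in> KF"
proof -
  obtain c1 c2 where c: "c = (c1, c2)" by (cases c)
  from \<open>F \<in> KF\<close> show ?thesis
  proof (cases rule: KF_cases)
    case (up a b)
    then show ?thesis using assms(1) by (simp add: c half_turn_up_tri type3636_half_turn down_tri_KF)
  next
    case (down a b)
    then show ?thesis using assms(1) by (simp add: c half_turn_down_tri type3636_half_turn up_tri_KF)
  next
    case (hexagon a b)
    then show ?thesis using assms(1) by (simp add: half_turn_hexagon hexagon_KF hex_center_diff)
  qed
qed

(* Both maps are the identity outside KV, as map_aut demands of an automorphism. *)
definition transl :: "int \<times> int \<Rightarrow> int \<times> int \<Rightarrow> int \<times> int" where
  "transl t p = (if p \<in> KV then p + t else p)"

definition half_turn :: "int \<times> int \<Rightarrow> int \<times> int \<Rightarrow> int \<times> int" where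
  "half_turn c p = (if p \<in> KV then c - p else p)"

lemma transl_image: "S \<subseteq> KV \<Longrightarrow> transl t ` S = (\<lambda>p. p + t) ` S"
  unfolding transl_def by (intro image_cong) auto

lemma half_turn_image: "S \<subseteq> KV \<Longrightarrow> half_turn c ` S = (\<lambda>p. c - p) ` S"
  unfolding half_turn_def by (intro image_cong) auto

lemma transl_comp:
  assumes "hex_center t"
  shows "transl s \<circ> transl t = transl (s + t)"
proof
  fix p
  have "p + t + s = p + (s + t)" by (simp add: ac_simps)
  then show "(transl s \<circ> transl t) p = transl (s + t) p"
    using assms by (simp add: transl_def KV_translate_iff)
qed

lemma transl_0 [simp]: "transl 0 = id"
  by (auto simp: transl_def fun_eq_iff)

lemma transl_inverse:
  assumes "hex_center t"
  shows "transl t (transl (- t) p) = p"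
proof -
  have "transl t \<circ> transl (- t) = id" using transl_comp[of "- t" t] assms by simp
  then show ?thesis by (metis comp_apply id_apply)
qed

lemma half_turn_involution: "hex_center c \<Longrightarrow> half_turn c (half_turn c p) = p"
  by (simp add: half_turn_def KV_half_turn_iff)

lemma transl_aut:
  assumes "hex_center t"
  shows "transl t \<in> map_aut Ktiling"
  unfolding Ktiling_def
proof (rule map_aut_by_inverse[where g = "transl (- t)"])
  fix p
  show "transl t (transl (- t) p) = p" "transl (- t) (transl t p) = p"
    using transl_inverse[of t] transl_inverse[of "- t"] assms by simp_all
  show "p \<in> KV \<Longrightarrow> transl t p \<in> KV" "p \<in> KV \<Longrightarrow> transl (- t) p \<in> KV"
    "p \<notin> KV \<Longrightarrow> transl t p = p"
    using assms by (simp_all add: transl_def KV_translate_iff KV_translate_diff_iff)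
next
  fix e assume "e \<in> KE"
  then show "transl t ` e \<in> KE" "transl (- t) ` e \<in> KE"
    using assms KE_translate[of t e] KE_translate[of "- t" e]
    by (simp_all add: transl_image KE_subset_KV)
next
  fix F assume "F \<in> KF"
  then show "transl t ` F \<in> KF" "transl (- t) ` F \<in> KF"
    using assms KF_translate[of t F] KF_translate[of "- t" F]
    by (simp_all add: transl_image KF_subset_KV)
qed

lemma half_turn_aut:
  assumes "hex_center c"
  shows "half_turn c \<in> map_aut Ktiling"
proof -
  have vertices: "p \<in> KV \<Longrightarrow> half_turn c p \<in> KV" "p \<notin> KV \<Longrightarrow> half_turn c p = p" for p
    using assms by (simp_all add: half_turn_def KV_half_turn_iff)
  have edges: "half_turn c ` e \<in> KE" if "e \<in> KE" for e
    using that assms by (simp add: half_turn_image KE_subset_KV KE_half_turn)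
  have faces: "half_turn c ` F \<in> KF" if "F \<in> KF" for F
    using that assms by (simp add: half_turn_image KF_subset_KV KF_half_turn)
  show ?thesis
    unfolding Ktiling_def
    by (rule map_aut_by_inverse[where g = "half_turn c"])
       (simp_all add: vertices edges faces half_turn_involution assms)
qed

section \<open>Rigidity\<close>

lemma up_tri_base_iff: "(c, d) \<in> up_tri x y \<longleftrightarrow> (x, y) \<in> {(c, d), (c - 1, d), (c, d - 1)}"
  by (auto simp: up_tri_def)

lemma down_tri_base_iff:
  "(c, d) \<in> down_tri x y \<longleftrightarrow> (x, y) \<in> {(c - 1, d), (c, d - 1), (c - 1, d - 1)}"
  by (auto simp: down_tri_def)

lemma hexagon_center_iff: "(c, d) \<in> hexagon (a, b) \<longleftrightarrow>
    (a, b) \<in> {(c+1, d), (c, d+1), (c-1, d+1), (c-1, d), (c, d-1), (c+1, d-1)}"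
  unfolding hexagon_Pair[symmetric] hexagon_def by (blast intro: tri_adj_sym)

lemma faces_near_origin:
  "up_tri 1 (-1) \<in> KF" "down_tri 1 (-1) \<in> KF" "up_tri 2 0 \<in> KF" "down_tri 0 (-2) \<in> KF"
  "up_tri 0 (-2) \<in> KF" "up_tri 5 (-1) \<in> KF" "down_tri (-3) (-1) \<in> KF" "up_tri (-3) (-1) \<in> KF"
  "hexagon (3,-1) \<in> KF" "hexagon (4,0) \<in> KF" "hexagon (0,0) \<in> KF" "hexagon (-1,-1) \<in> KF"
  by (simp_all add: up_tri_KF down_tri_KF hexagon_KF type3636_def)

lemma faces_at_edges_near_origin:
  "{G \<in> KF. (2,-1) \<in> G \<and> (1,0) \<in> G} \<subseteq> {up_tri 1 (-1), down_tri 1 (-1)}"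
  "{G \<in> KF. (2,0) \<in> G \<and> (2,-1) \<in> G} \<subseteq> {down_tri 1 (-1), hexagon (3,-1)}"
  "{G \<in> KF. (2,0) \<in> G \<and> (3,0) \<in> G} \<subseteq> {hexagon (3,-1), up_tri 2 0}"
  "{G \<in> KF. (1,-1) \<in> G \<and> (1,0) \<in> G} \<subseteq> {up_tri 1 (-1), hexagon (0,0)}"
  "{G \<in> KF. (1,-1) \<in> G \<and> (0,-1) \<in> G} \<subseteq> {hexagon (0,0), down_tri 0 (-2)}"
  "{G \<in> KF. (0,-1) \<in> G \<and> (1,-2) \<in> G} \<subseteq> {down_tri 0 (-2), up_tri 0 (-2)}"
  "{G \<in> KF. (3,0) \<in> G \<and> (4,-1) \<in> G} \<subseteq> {hexagon (3,-1), hexagon (4,0)}"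
  "{G \<in> KF. (5,-1) \<in> G \<and> (5,0) \<in> G} \<subseteq> {hexagon (4,0), up_tri 5 (-1)}"
  "{G \<in> KF. (0,-1) \<in> G \<and> (-1,0) \<in> G} \<subseteq> {hexagon (0,0), hexagon (-1,-1)}"
  "{G \<in> KF. (-2,0) \<in> G \<and> (-2,-1) \<in> G} \<subseteq> {hexagon (-1,-1), down_tri (-3) (-1)}"
  "{G \<in> KF. (-2,-1) \<in> G \<and> (-3,0) \<in> G} \<subseteq> {down_tri (-3) (-1), up_tri (-3) (-1)}"
  by (rule subsetI, elim CollectE conjE KF_cases; hypsubst;
      simp only: up_tri_base_iff down_tri_base_iff hexagon_center_iff insert_iff empty_iff prod.inject;
      elim disjE conjE; simp add: type3636_def)+

lemma singleton_notin_KE [simp]: "{p} \<notin> KE"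
  using doubleton_in_KE_iff[of p p] tri_adj_irrefl by simp

lemma hexagon_neighbours_near_origin:
  "{z \<in> hexagon (3,-1). {(2,0), z} \<in> KE} \<subseteq> {(2,-1), (3,0)}"
  "{z \<in> hexagon (3,-1). {(3,0), z} \<in> KE} \<subseteq> {(2,0), (4,-1)}"
  "{z \<in> hexagon (4,0). {(4,-1), z} \<in> KE} \<subseteq> {(3,0), (5,-1)}"
  "{z \<in> hexagon (4,0). {(5,-1), z} \<in> KE} \<subseteq> {(4,-1), (5,0)}"
  "{z \<in> hexagon (0,0). {(1,-1), z} \<in> KE} \<subseteq> {(1,0), (0,-1)}"
  "{z \<in> hexagon (0,0). {(0,-1), z} \<in> KE} \<subseteq> {(1,-1), (-1,0)}"
  "{z \<in> hexagon (-1,-1). {(-1,0), z} \<in> KE} \<subseteq> {(0,-1), (-2,0)}"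
  "{z \<in> hexagon (-1,-1). {(-2,0), z} \<in> KE} \<subseteq> {(-1,0), (-2,-1)}"
  by (rule subsetI, elim CollectE conjE; simp only: hexagon_Pair insert_iff empty_iff;
      elim disjE; simp add: doubleton_in_KE_iff tri_adj_def)+

(* Rigidity spreads face by face: once both ends of an edge and one face at it are fixed, the
   other face at that edge is fixed setwise, and then its remaining vertices. *)
lemma aut_K_rigid_right:
  assumes f: "f \<in> map_aut Ktiling" and T0: "\<forall>p\<in>up_tri 1 (-1). f p = p"
  shows "f ` hexagon (3,-1) = hexagon (3,-1)" "\<forall>p\<in>up_tri 2 0. f p = p"
proof -
  have f': "f \<in> map_aut (KV, KE, KF)" using f by (simp add: Ktiling_def)
  have inj: "inj f" by (rule map_aut_inj[OF f'])
  note mem = up_tri_base_iff down_tri_base_iff hexagon_center_iff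
  have fixed: "f (1,-1) = (1,-1)" "f (2,-1) = (2,-1)" "f (1,0) = (1,0)"
    using T0 by (simp_all add: up_tri_def)
  then have "f ` up_tri 1 (-1) = up_tri 1 (-1)" by (simp add: up_tri_def)
  then have "f ` down_tri 1 (-1) = down_tri 1 (-1)"
    by (intro map_aut_fix_adjacent_face[OF f' faces_at_edges_near_origin(1), where z = "(2,0)"])
       (simp_all add: fixed faces_near_origin mem)
  moreover from this have "f (2,0) = (2,0)"
    by (rule inj_fix_third_vertex[OF inj, where p = "(2,-1)" and q = "(1,0)"])
       (simp_all add: fixed down_tri_def)
  ultimately have hex: "f ` hexagon (3,-1) = hexagon (3,-1)"
    by (intro map_aut_fix_adjacent_face[OF f' faces_at_edges_near_origin(2), where z = "(4,-1)"])
       (simp_all add: fixed faces_near_origin mem)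
  moreover have "f (3,0) = (3,0)"
    by (rule map_aut_fix_next_vertex[OF f' hexagon_neighbours_near_origin(1)])
       (simp_all add: hex fixed \<open>f (2,0) = (2,0)\<close> mem doubleton_in_KE_iff tri_adj_def)
  ultimately have "f ` up_tri 2 0 = up_tri 2 0"
    by (intro map_aut_fix_adjacent_face[OF f' faces_at_edges_near_origin(3), where z = "(2,1)"])
       (simp_all add: \<open>f (2,0) = (2,0)\<close> faces_near_origin mem)
  then have "f (2,1) = (2,1)"
    by (rule inj_fix_third_vertex[OF inj, where p = "(2,0)" and q = "(3,0)"])
       (simp_all add: \<open>f (2,0) = (2,0)\<close> \<open>f (3,0) = (3,0)\<close> up_tri_def)
  then show "\<forall>p\<in>up_tri 2 0. f p = p"
    using \<open>f (2,0) = (2,0)\<close> \<open>f (3,0) = (3,0)\<close> by (simp add: up_tri_def)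
  show "f ` hexagon (3,-1) = hexagon (3,-1)" by (fact hex)
qed

lemma aut_K_rigid_down:
  assumes f: "f \<in> map_aut Ktiling" and T0: "\<forall>p\<in>up_tri 1 (-1). f p = p"
  shows "f ` hexagon (0,0) = hexagon (0,0)" "\<forall>p\<in>up_tri 0 (-2). f p = p"
proof -
  have f': "f \<in> map_aut (KV, KE, KF)" using f by (simp add: Ktiling_def)
  have inj: "inj f" by (rule map_aut_inj[OF f'])
  note mem = up_tri_base_iff down_tri_base_iff hexagon_center_iff
  have fixed: "f (1,-1) = (1,-1)" "f (2,-1) = (2,-1)" "f (1,0) = (1,0)"
    using T0 by (simp_all add: up_tri_def)
  then have "f ` up_tri 1 (-1) = up_tri 1 (-1)" by (simp add: up_tri_def)
  then show hex: "f ` hexagon (0,0) = hexagon (0,0)"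
    by (intro map_aut_fix_adjacent_face[OF f' faces_at_edges_near_origin(4), where z = "(-1,0)"])
       (simp_all add: fixed faces_near_origin mem)
  have fixed1: "f (0,-1) = (0,-1)"
    by (rule map_aut_fix_next_vertex[OF f' hexagon_neighbours_near_origin(5)])
       (simp_all add: hex fixed mem doubleton_in_KE_iff tri_adj_def)
  have "f ` down_tri 0 (-2) = down_tri 0 (-2)"
    by (intro map_aut_fix_adjacent_face[OF f' faces_at_edges_near_origin(5), where z = "(1,-2)"])
       (simp_all add: hex fixed fixed1 faces_near_origin mem)
  moreover from this have fixed2: "f (1,-2) = (1,-2)"
    by (rule inj_fix_third_vertex[OF inj, where p = "(1,-1)" and q = "(0,-1)"])
       (simp_all add: fixed fixed1 down_tri_def)
  ultimately have "f ` up_tri 0 (-2) = up_tri 0 (-2)"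
    by (intro map_aut_fix_adjacent_face[OF f' faces_at_edges_near_origin(6), where z = "(0,-2)"])
       (simp_all add: fixed1 faces_near_origin mem)
  then have "f (0,-2) = (0,-2)"
    by (rule inj_fix_third_vertex[OF inj, where p = "(0,-1)" and q = "(1,-2)"])
       (simp_all add: fixed1 fixed2 up_tri_def)
  then show "\<forall>p\<in>up_tri 0 (-2). f p = p" using fixed1 fixed2 by (simp add: up_tri_def)
qed

lemma aut_K_rigid_far_right:
  assumes f: "f \<in> map_aut Ktiling" and hex: "f ` hexagon (3,-1) = hexagon (3,-1)"
    and fixed: "f (2,0) = (2,0)" "f (3,0) = (3,0)"
  shows "\<forall>p\<in>up_tri 5 (-1). f p = p"
proof -
  have f': "f \<in> map_aut (KV, KE, KF)" using f by (simp add: Ktiling_def)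
  have inj: "inj f" by (rule map_aut_inj[OF f'])
  note mem = up_tri_base_iff down_tri_base_iff hexagon_center_iff
  have fixed1: "f (4,-1) = (4,-1)"
    by (rule map_aut_fix_next_vertex[OF f' hexagon_neighbours_near_origin(2)])
       (simp_all add: hex fixed mem doubleton_in_KE_iff tri_adj_def)
  have hex': "f ` hexagon (4,0) = hexagon (4,0)"
    by (intro map_aut_fix_adjacent_face[OF f' faces_at_edges_near_origin(7), where z = "(5,0)"])
       (simp_all add: hex fixed fixed1 faces_near_origin mem)
  have fixed2: "f (5,-1) = (5,-1)"
    by (rule map_aut_fix_next_vertex[OF f' hexagon_neighbours_near_origin(3)])
       (simp_all add: hex' fixed fixed1 mem doubleton_in_KE_iff tri_adj_def)
  have fixed3: "f (5,0) = (5,0)"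
    by (rule map_aut_fix_next_vertex[OF f' hexagon_neighbours_near_origin(4)])
       (simp_all add: hex' fixed1 fixed2 mem doubleton_in_KE_iff tri_adj_def)
  have "f ` up_tri 5 (-1) = up_tri 5 (-1)"
    by (intro map_aut_fix_adjacent_face[OF f' faces_at_edges_near_origin(8), where z = "(6,-1)"])
       (simp_all add: hex' fixed2 fixed3 faces_near_origin mem)
  then have "f (6,-1) = (6,-1)"
    by (rule inj_fix_third_vertex[OF inj, where p = "(5,-1)" and q = "(5,0)"])
       (simp_all add: fixed2 fixed3 up_tri_def)
  then show ?thesis using fixed2 fixed3 by (simp add: up_tri_def)
qed

lemma aut_K_rigid_far_left:
  assumes f: "f \<in> map_aut Ktiling" and hex: "f ` hexagon (0,0) = hexagon (0,0)"
    and fixed: "f (1,-1) = (1,-1)" "f (0,-1) = (0,-1)"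
  shows "\<forall>p\<in>up_tri (-3) (-1). f p = p"
proof -
  have f': "f \<in> map_aut (KV, KE, KF)" using f by (simp add: Ktiling_def)
  have inj: "inj f" by (rule map_aut_inj[OF f'])
  note mem = up_tri_base_iff down_tri_base_iff hexagon_center_iff
  have fixed1: "f (-1,0) = (-1,0)"
    by (rule map_aut_fix_next_vertex[OF f' hexagon_neighbours_near_origin(6)])
       (simp_all add: hex fixed mem doubleton_in_KE_iff tri_adj_def)
  have hex': "f ` hexagon (-1,-1) = hexagon (-1,-1)"
    by (intro map_aut_fix_adjacent_face[OF f' faces_at_edges_near_origin(9), where z = "(-2,0)"])
       (simp_all add: hex fixed fixed1 faces_near_origin mem)
  have fixed2: "f (-2,0) = (-2,0)"
    by (rule map_aut_fix_next_vertex[OF f' hexagon_neighbours_near_origin(7)])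
       (simp_all add: hex' fixed fixed1 mem doubleton_in_KE_iff tri_adj_def)
  have fixed3: "f (-2,-1) = (-2,-1)"
    by (rule map_aut_fix_next_vertex[OF f' hexagon_neighbours_near_origin(8)])
       (simp_all add: hex' fixed1 fixed2 mem doubleton_in_KE_iff tri_adj_def)
  have "f ` down_tri (-3) (-1) = down_tri (-3) (-1)"
    by (intro map_aut_fix_adjacent_face[OF f' faces_at_edges_near_origin(10), where z = "(-3,0)"])
       (simp_all add: hex' fixed2 fixed3 faces_near_origin mem)
  moreover from this have fixed4: "f (-3,0) = (-3,0)"
    by (rule inj_fix_third_vertex[OF inj, where p = "(-2,0)" and q = "(-2,-1)"])
       (simp_all add: fixed2 fixed3 down_tri_def)
  ultimately have "f ` up_tri (-3) (-1) = up_tri (-3) (-1)"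
    by (intro map_aut_fix_adjacent_face[OF f' faces_at_edges_near_origin(11), where z = "(-3,-1)"])
       (simp_all add: fixed3 faces_near_origin mem)
  then have "f (-3,-1) = (-3,-1)"
    by (rule inj_fix_third_vertex[OF inj, where p = "(-2,-1)" and q = "(-3,0)"])
       (simp_all add: fixed3 fixed4 up_tri_def)
  then show ?thesis using fixed3 fixed4 by (simp add: up_tri_def)
qed

(* The four triangles are the images of up_tri 1 (-1) under the translations by (1,1), (-1,-1),
   (4,0) and (-4,0), which generate L. *)
lemma aut_K_fix_neighbour_triangles:
  assumes f: "f \<in> map_aut Ktiling" and T0: "\<forall>p\<in>up_tri 1 (-1). f p = p"
  shows "\<forall>p\<in>up_tri 2 0 \<union> up_tri 0 (-2) \<union> up_tri 5 (-1) \<union> up_tri (-3) (-1). f p = p"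
proof -
  have "f (2,0) = (2,0)" "f (3,0) = (3,0)"
    using aut_K_rigid_right(2)[OF f T0] by (simp_all add: up_tri_def)
  moreover have "f (1,-1) = (1,-1)" "f (0,-1) = (0,-1)"
    using T0 aut_K_rigid_down(2)[OF f T0] by (simp_all add: up_tri_def)
  ultimately show ?thesis
    using aut_K_rigid_right[OF f T0] aut_K_rigid_down[OF f T0]
      aut_K_rigid_far_right[OF f] aut_K_rigid_far_left[OF f] by blast
qed

lemma aut_K_comp: "f \<in> map_aut Ktiling \<Longrightarrow> g \<in> map_aut Ktiling \<Longrightarrow> f \<circ> g \<in> map_aut Ktiling"
  unfolding Ktiling_def by (rule map_aut_comp)

lemma transl_conj_fixes:
  assumes f: "f \<in> map_aut Ktiling" and t: "hex_center t" and S: "S \<subseteq> KV"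
  shows "(\<forall>p\<in>S. (transl (- t) \<circ> f \<circ> transl t) p = p) \<longleftrightarrow> (\<forall>p\<in>(\<lambda>p. p + t) ` S. f p = p)"
proof -
  have "(transl (- t) \<circ> f \<circ> transl t) p = p \<longleftrightarrow> f (p + t) = p + t" if "p \<in> S" for p
  proof -
    have "p \<in> KV" "p + t \<in> KV" using that S t by (auto simp: KV_translate_iff)
    moreover from this have "f (p + t) \<in> KV" using f by (simp add: Ktiling_def map_aut_vertex)
    ultimately show ?thesis by (simp add: transl_def diff_eq_eq)
  qed
  then show ?thesis by simp
qed

lemma aut_K_fix_translated_triangles:
  assumes f: "f \<in> map_aut Ktiling" and "type3636 (a, b)" and fixed: "\<forall>p\<in>up_tri a b. f p = p"
  shows "\<forall>p\<in>up_tri (a + 1) (b + 1) \<union> up_tri (a - 1) (b - 1) \<union> up_tri (a + 4) b \<union> up_tri (a - 4) b.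
    f p = p"
proof -
  let ?t = "(a - 1, b + 1)" and ?U = "up_tri 2 0 \<union> up_tri 0 (-2) \<union> up_tri 5 (-1) \<union> up_tri (-3) (-1)"
  have t: "hex_center ?t" using \<open>type3636 (a, b)\<close> by (simp add: type3636_def) presburger
  moreover have "hex_center (- ?t)" using t by (simp only: hex_center_uminus)
  ultimately have g: "transl (- ?t) \<circ> f \<circ> transl ?t \<in> map_aut Ktiling"
    by (intro aut_K_comp transl_aut f)
  have "(\<lambda>p. p + ?t) ` up_tri 1 (-1) = up_tri a b" by (simp add: translate_up_tri)
  moreover have "up_tri 1 (-1) \<subseteq> KV" "?U \<subseteq> KV" by (simp_all add: up_tri_def)
  ultimately have "\<forall>p\<in>up_tri 1 (-1). (transl (- ?t) \<circ> f \<circ> transl ?t) p = p"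
    using transl_conj_fixes[OF f t] fixed by blast
  then have "\<forall>p\<in>?U. (transl (- ?t) \<circ> f \<circ> transl ?t) p = p"
    by (rule aut_K_fix_neighbour_triangles[OF g])
  moreover have "(\<lambda>p. p + ?t) ` ?U =
      up_tri (a + 1) (b + 1) \<union> up_tri (a - 1) (b - 1) \<union> up_tri (a + 4) b \<union> up_tri (a - 4) b"
    by (simp add: image_Un translate_up_tri algebra_simps)
  ultimately show ?thesis
    using transl_conj_fixes[OF f t \<open>?U \<subseteq> KV\<close>] by simp
qed

lemma aut_K_fix_type3636_triangles:
  assumes f: "f \<in> map_aut Ktiling" and T0: "\<forall>p\<in>up_tri 1 (-1). f p = p" and "type3636 (a, b)"
  shows "\<forall>p\<in>up_tri a b. f p = p"
proof -
  define P where "P x y \<longleftrightarrow> (\<forall>p\<in>up_tri x y. f p = p)" for x y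
  have step: "P (x + 1) (y + 1) \<and> P (x - 1) (y - 1) \<and> P (x + 4) y \<and> P (x - 4) y"
    if "P x y" "(x - y) mod 4 = 2" for x y
    using aut_K_fix_translated_triangles[OF f _ that(1)[unfolded P_def]] that(2)
    by (simp add: P_def type3636_def)
  have row: "P (1 + 4 * n) (-1)" for n :: int
  proof (induction n rule: int_induct[where k = 0])
    case base
    then show ?case using T0 by (simp add: P_def)
  next
    case (step1 i)
    have "P (1 + 4 * i + 4) (-1)" using step[OF step1(2)] by simp
    then show ?case by (simp add: distrib_left add.assoc)
  next
    case (step2 i)
    have "P (1 + 4 * i - 4) (-1)" using step[OF step2(2)] by simp
    then show ?case by (simp add: right_diff_distrib diff_add_eq)
  qed
  have diagonal: "P (1 + 4 * n + k) (k - 1)" for n k :: int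
  proof (induction k rule: int_induct[where k = 0])
    case base
    then show ?case using row by simp
  next
    case (step1 i)
    have "P (1 + 4 * n + i + 1) (i - 1 + 1)" using step[OF step1(2)] by simp
    then show ?case by (simp add: add.assoc)
  next
    case (step2 i)
    have "P (1 + 4 * n + i - 1) (i - 1 - 1)" using step[OF step2(2)] by simp
    then show ?case by (simp add: diff_add_eq add_diff_eq)
  qed
  have "(a - b) mod 4 = 2" using \<open>type3636 (a, b)\<close> by (simp add: type3636_def)
  then have "1 + 4 * ((a - b) div 4) + (b + 1) = a"
    using div_mult_mod_eq[of "a - b" 4] by linarith
  then show ?thesis using diagonal[of "(a - b) div 4" "b + 1"] by (simp add: P_def)
qed

lemma KV_in_type3636_up_tri:
  assumes "p \<in> KV"
  obtains a b where "type3636 (a, b)" "p \<in> up_tri a b"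
proof -
  obtain x y where p: "p = (x, y)" by (cases p)
  then have "(x - y) mod 4 = 1 \<or> (x - y) mod 4 = 2 \<or> (x - y) mod 4 = 3"
    using assms by simp presburger
  then show ?thesis
  proof (elim disjE)
    assume "(x - y) mod 4 = 1"
    then show ?thesis by (intro that[of x "y - 1"]) (simp_all add: p type3636_def up_tri_def, presburger)
  next
    assume "(x - y) mod 4 = 2"
    then show ?thesis by (intro that[of x y]) (simp_all add: p type3636_def up_tri_def)
  next
    assume "(x - y) mod 4 = 3"
    then show ?thesis by (intro that[of "x - 1" y]) (simp_all add: p type3636_def up_tri_def, presburger)
  qed
qed

lemma aut_K_rigid:
  assumes "f \<in> map_aut Ktiling" "\<forall>p\<in>up_tri 1 (-1). f p = p" "p \<in> KV"
  shows "f p = p"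
  using assms aut_K_fix_type3636_triangles by (metis KV_in_type3636_up_tri)

lemma aut_K_eq_if_eq_on_base_triangle:
  assumes g: "g \<in> map_aut Ktiling" and h: "h \<in> map_aut Ktiling" and h': "h' \<in> map_aut Ktiling"
    and inverse: "\<And>x. h (h' x) = x" "\<And>x. h' (h x) = x"
    and base: "\<forall>p\<in>up_tri 1 (-1). g p = h p"
  shows "g = h"
proof
  fix p
  show "g p = h p"
  proof (cases "p \<in> KV")
    case True
    have "h' \<circ> g \<in> map_aut Ktiling" using h' g by (rule aut_K_comp)
    moreover have "\<forall>p\<in>up_tri 1 (-1). (h' \<circ> g) p = p" using base inverse(2) by simp
    ultimately have "(h' \<circ> g) p = p" using True by (rule aut_K_rigid)
    then show ?thesis using inverse(1) by (metis comp_apply)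
  next
    case False
    then show ?thesis using g h by (simp add: Ktiling_def map_aut_outside)
  qed
qed

section \<open>Orientation-preserving automorphisms\<close>

lemma type3636_vertex_of_up_tri:
  "type3636 (a, b) \<Longrightarrow> p \<in> up_tri a b \<Longrightarrow> type3636 p \<Longrightarrow> p = (a, b)"
  by (auto simp: up_tri_def type3636_def; presburger)

lemma type3636_vertex_of_down_tri:
  "type3636 (a, b) \<Longrightarrow> p \<in> down_tri a b \<Longrightarrow> type3636 p \<Longrightarrow> p = (a + 1, b + 1)"
  by (auto simp: down_tri_def type3636_def; presburger)

lemma aut_K_base_triangle_image:
  assumes g: "g \<in> map_aut Ktiling" and og: "orientation_preserving g"
  obtains (translation) t where "hex_center t" "\<forall>p\<in>up_tri 1 (-1). g p = p + t"
    | (rotation) c where "hex_center c" "\<forall>p\<in>up_tri 1 (-1). g p = c - p"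
proof -
  have g': "g \<in> map_aut (KV, KE, KF)" using g by (simp add: Ktiling_def)
  have inj: "inj g" by (rule map_aut_inj[OF g'])
  have "g ` up_tri 1 (-1) \<in> KF" using map_aut_faces[OF g'] faces_near_origin(1) by blast
  moreover have "card (g ` up_tri 1 (-1)) = 3" using inj by (simp add: card_image inj_on_subset)
  ultimately obtain a b where ab: "type3636 (a, b)"
    and image: "g ` up_tri 1 (-1) = up_tri a b \<or> g ` up_tri 1 (-1) = down_tri a b"
    by (rule KF_triangle_cases)
  have type: "type3636 (g (1,-1))" by (rule aut_K_type3636[OF g]) (simp_all add: type3636_def)
  have "orient (1,-1) (2,-1) (1,0) > 0" by (simp add: orient_def)
  then have positive: "orient (g (1,-1)) (g (2,-1)) (g (1,0)) > 0"
    using og faces_near_origin(1) unfolding orientation_preserving_def up_tri_def by simp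
  have distinct: "g (2,-1) \<noteq> g (1,-1)" "g (1,0) \<noteq> g (1,-1)" "g (2,-1) \<noteq> g (1,0)"
    using inj by (simp_all add: inj_eq)
  have mem: "g (1,-1) \<in> g ` up_tri 1 (-1)" "g (2,-1) \<in> g ` up_tri 1 (-1)" "g (1,0) \<in> g ` up_tri 1 (-1)"
    by (simp_all add: up_tri_def)
  from image show ?thesis
  proof
    assume up: "g ` up_tri 1 (-1) = up_tri a b"
    then have "g (1,-1) = (a, b)" using type3636_vertex_of_up_tri ab type mem(1) by simp
    then have "g (2,-1) = (a + 1, b) \<and> g (1,0) = (a, b + 1)"
      using mem(2,3) distinct positive unfolding up by (auto simp: up_tri_def orient_def)
    moreover have "hex_center (a - 1, b + 1)" using ab by (simp add: type3636_def) presburger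
    ultimately show ?thesis
      using \<open>g (1,-1) = (a, b)\<close> by (intro translation[of "(a - 1, b + 1)"]) (simp_all add: up_tri_def)
  next
    assume down: "g ` up_tri 1 (-1) = down_tri a b"
    then have "g (1,-1) = (a + 1, b + 1)" using type3636_vertex_of_down_tri ab type mem(1) by simp
    then have "g (2,-1) = (a, b + 1) \<and> g (1,0) = (a + 1, b)"
      using mem(2,3) distinct positive unfolding down by (auto simp: down_tri_def orient_def)
    moreover have "hex_center (a + 2, b)" using ab by (simp add: type3636_def) presburger
    ultimately show ?thesis
      using \<open>g (1,-1) = (a + 1, b + 1)\<close> by (intro rotation[of "(a + 2, b)"]) (simp_all add: up_tri_def)
  qed
qed

lemma aut_K_orientation_preserving_cases:
  assumes g: "g \<in> map_aut Ktiling" and og: "orientation_preserving g"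
  obtains (translation) t where "hex_center t" "g = transl t"
    | (rotation) c where "hex_center c" "g = half_turn c"
  using g og
proof (cases rule: aut_K_base_triangle_image)
  case (translation t)
  have "g = transl t"
  proof (rule aut_K_eq_if_eq_on_base_triangle[OF g transl_aut[OF translation(1)] transl_aut[of "- t"]])
    show "transl t (transl (- t) x) = x" "transl (- t) (transl t x) = x" for x
      using transl_inverse[of t] transl_inverse[of "- t"] translation(1) by simp_all
    show "\<forall>p\<in>up_tri 1 (-1). g p = transl t p"
      using translation(2) by (simp add: transl_def up_tri_def)
  qed (use translation(1) in simp_all)
  with translation(1) show ?thesis by (rule that(1))
next
  case (rotation c)
  have "g = half_turn c"
  proof (rule aut_K_eq_if_eq_on_base_triangle[OF g half_turn_aut[OF rotation(1)]
        half_turn_aut[OF rotation(1)]])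
    show "\<forall>p\<in>up_tri 1 (-1). g p = half_turn c p"
      using rotation(2) by (simp add: half_turn_def up_tri_def)
  qed (simp_all add: half_turn_involution[OF rotation(1)])
  with rotation(1) show ?thesis by (rule that(2))
qed

lemma half_turn_ne_id: "half_turn c \<noteq> id"
proof
  assume "half_turn c = id"
  then have "half_turn c (1, 0) = (1, 0)" "half_turn c (2, 0) = (2, 0)" by simp_all
  then show False by (cases c) (simp add: half_turn_def zero_prod_def)
qed

lemma half_turn_fixes_cell:
  assumes "hex_center c"
  shows "(\<exists>v\<in>KV. half_turn c v = v) \<or> (\<exists>e\<in>KE. half_turn c ` e = e) \<or> (\<exists>F\<in>KF. half_turn c ` F = F)"
proof -
  obtain c1 c2 where c: "c = (c1, c2)" by (cases c)
  have m: "(c1 - c2) mod 4 = 0" using assms c by simp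
  show ?thesis
  proof (cases "even c1")
    case True
    moreover have "even c2" using True m by presburger
    ultimately obtain u v where uv: "c1 = 2 * u" "c2 = 2 * v" by (meson evenE)
    show ?thesis
    proof (cases "(u, v) \<in> KV")
      case True
      then have "half_turn c (u, v) = (u, v)" by (simp add: half_turn_def c uv)
      then show ?thesis using True by blast
    next
      case False
      then have center: "hex_center (u, v)" by (simp add: KV_def)
      have "half_turn c ` hexagon (u, v) = hexagon (u, v)"
        using hexagon_subset_KV[OF center] by (simp add: half_turn_image half_turn_hexagon c uv)
      then show ?thesis using hexagon_KF[OF center] by blast
    qed
  next
    case False
    moreover have "odd c2" using False m by presburger
    ultimately obtain u v where uv: "c1 = 2 * u + 1" "c2 = 2 * v + 1" by (meson oddE)
    have "(u - v) mod 2 = 0" using m uv by presburger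
    then have edge: "{(u + 1, v), (u, v + 1)} \<in> KE"
      by (simp add: doubleton_in_KE_iff tri_adj_def) presburger
    have "half_turn c ` {(u + 1, v), (u, v + 1)} = {(u + 1, v), (u, v + 1)}"
      using KE_subset_KV[OF edge] by (simp add: half_turn_def c uv insert_commute)
    then show ?thesis using edge by blast
  qed
qed

lemma free_aut_K_is_transl:
  assumes g: "g \<in> map_aut Ktiling" and og: "orientation_preserving g"
    and free: "g \<noteq> id \<longrightarrow> (\<forall>v\<in>KV. g v \<noteq> v) \<and> (\<forall>e\<in>KE. g ` e \<noteq> e) \<and> (\<forall>F\<in>KF. g ` F \<noteq> F)"
  obtains t where "hex_center t" "g = transl t"
  using g og
proof (cases rule: aut_K_orientation_preserving_cases)
  case (rotation c)
  then have "g \<noteq> id" using half_turn_ne_id by simp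
  moreover have "\<not> ((\<forall>v\<in>KV. g v \<noteq> v) \<and> (\<forall>e\<in>KE. g ` e \<noteq> e) \<and> (\<forall>F\<in>KF. g ` F \<noteq> F))"
    using half_turn_fixes_cell[OF rotation(1)] rotation(2) by blast
  ultimately show ?thesis using free by blast
qed

section \<open>Translation groups and their quotients\<close>

definition translation_group :: "(int \<times> int \<Rightarrow> int \<times> int) set \<Rightarrow> bool" where
  "translation_group \<Gamma> \<longleftrightarrow> is_subgroup_aut \<Gamma> \<and> (\<forall>g\<in>\<Gamma>. \<exists>t. hex_center t \<and> g = transl t)"

definition transl_lattice :: "(int \<times> int \<Rightarrow> int \<times> int) set \<Rightarrow> (int \<times> int) set" where
  "transl_lattice \<Gamma> = {t. hex_center t \<and> transl t \<in> \<Gamma>}"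

lemma translation_group_if_free_torus:
  assumes "is_subgroup_aut \<Gamma>" "acts_freely \<Gamma>" "quotient_is_torus \<Gamma>"
  shows "translation_group \<Gamma>"
  unfolding translation_group_def
proof (intro conjI ballI)
  fix g assume "g \<in> \<Gamma>"
  then have "g \<in> map_aut Ktiling" "orientation_preserving g"
    and "g \<noteq> id \<longrightarrow> (\<forall>v\<in>KV. g v \<noteq> v) \<and> (\<forall>e\<in>KE. g ` e \<noteq> e) \<and> (\<forall>F\<in>KF. g ` F \<noteq> F)"
    using assms by (auto simp: is_subgroup_aut_def acts_freely_def quotient_is_torus_def)
  then show "\<exists>t. hex_center t \<and> g = transl t" by (metis free_aut_K_is_transl)
qed (fact assms(1))

context
  fixes \<Gamma> :: "(int \<times> int \<Rightarrow> int \<times> int) set"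
  assumes \<Gamma>: "translation_group \<Gamma>"
begin

lemma transl_lattice_hex_center: "t \<in> transl_lattice \<Gamma> \<Longrightarrow> hex_center t"
  by (simp add: transl_lattice_def)

lemma translation_group_element:
  assumes "g \<in> \<Gamma>"
  obtains t where "t \<in> transl_lattice \<Gamma>" "g = transl t"
proof -
  obtain t where "hex_center t" "g = transl t"
    using \<Gamma> assms unfolding translation_group_def by blast
  then show ?thesis using assms by (intro that[of t]) (simp_all add: transl_lattice_def)
qed

lemma transl_lattice_add:
  assumes "s \<in> transl_lattice \<Gamma>" "t \<in> transl_lattice \<Gamma>"
  shows "s + t \<in> transl_lattice \<Gamma>"
proof -
  have "transl s \<circ> transl t \<in> \<Gamma>"
    using \<Gamma> assms by (simp add: translation_group_def is_subgroup_aut_def transl_lattice_def)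
  then show ?thesis
    using assms by (simp add: transl_lattice_def transl_comp hex_center_add)
qed

lemma transl_lattice_uminus:
  assumes "t \<in> transl_lattice \<Gamma>"
  shows "- t \<in> transl_lattice \<Gamma>"
proof -
  have t: "hex_center t" "transl t \<in> \<Gamma>" using assms by (simp_all add: transl_lattice_def)
  have "transl t \<circ> transl (- t) = id" "transl (- t) \<circ> transl t = id"
    using transl_comp[of "- t" t] transl_comp[of t "- t"] t(1) by simp_all
  then have "inv (transl t) = transl (- t)" by (rule inv_unique_comp)
  moreover have "inv (transl t) \<in> \<Gamma>"
    using \<Gamma> t(2) by (simp add: translation_group_def is_subgroup_aut_def)
  ultimately show ?thesis using t(1) by (simp add: transl_lattice_def)
qed

lemma zero_in_transl_lattice: "0 \<in> transl_lattice \<Gamma>"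
  using \<Gamma> by (simp add: translation_group_def is_subgroup_aut_def transl_lattice_def hex_center_def)

lemma orbit_eq_transl_lattice:
  assumes "p \<in> KV"
  shows "aut_orbit \<Gamma> p = (\<lambda>t. p + t) ` transl_lattice \<Gamma>"
proof
  show "aut_orbit \<Gamma> p \<subseteq> (\<lambda>t. p + t) ` transl_lattice \<Gamma>"
  proof
    fix x assume "x \<in> aut_orbit \<Gamma> p"
    then obtain g where "g \<in> \<Gamma>" "x = g p" by (auto simp: aut_orbit_def)
    moreover from this obtain t where "t \<in> transl_lattice \<Gamma>" "g = transl t"
      by (elim translation_group_element)
    ultimately show "x \<in> (\<lambda>t. p + t) ` transl_lattice \<Gamma>" using assms by (simp add: transl_def)
  qed
  show "(\<lambda>t. p + t) ` transl_lattice \<Gamma> \<subseteq> aut_orbit \<Gamma> p"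
  proof (rule image_subsetI)
    fix t assume "t \<in> transl_lattice \<Gamma>"
    then have "transl t \<in> \<Gamma>" by (simp add: transl_lattice_def)
    moreover have "transl t p = p + t" using assms by (simp add: transl_def)
    ultimately show "p + t \<in> aut_orbit \<Gamma> p" unfolding aut_orbit_def by (metis image_eqI)
  qed
qed

lemma orbit_eq_iff_lattice:
  assumes "p \<in> KV" "q \<in> KV"
  shows "aut_orbit \<Gamma> p = aut_orbit \<Gamma> q \<longleftrightarrow> q - p \<in> transl_lattice \<Gamma>"
proof
  assume "aut_orbit \<Gamma> p = aut_orbit \<Gamma> q"
  moreover have "q \<in> aut_orbit \<Gamma> q"
    using orbit_eq_transl_lattice[OF assms(2)] zero_in_transl_lattice by force
  ultimately have "q \<in> (\<lambda>t. p + t) ` transl_lattice \<Gamma>"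
    using orbit_eq_transl_lattice[OF assms(1)] by simp
  then obtain t where "t \<in> transl_lattice \<Gamma>" "q = p + t" by blast
  then show "q - p \<in> transl_lattice \<Gamma>" by simp
next
  assume d: "q - p \<in> transl_lattice \<Gamma>"
  have "(\<lambda>t. q + t) ` transl_lattice \<Gamma> = (\<lambda>t. p + t) ` transl_lattice \<Gamma>"
  proof (intro equalityI image_subsetI)
    fix t assume "t \<in> transl_lattice \<Gamma>"
    then have "(q - p) + t \<in> transl_lattice \<Gamma>" "t + - (q - p) \<in> transl_lattice \<Gamma>"
      using d transl_lattice_add transl_lattice_uminus by blast+
    moreover have "q + t = p + ((q - p) + t)" "p + t = q + (t + - (q - p))" by (simp_all add: algebra_simps)
    ultimately show "q + t \<in> (\<lambda>t. p + t) ` transl_lattice \<Gamma>" "p + t \<in> (\<lambda>t. q + t) ` transl_lattice \<Gamma>"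
      by (metis image_eqI)+
  qed
  then show "aut_orbit \<Gamma> p = aut_orbit \<Gamma> q"
    using orbit_eq_transl_lattice assms by simp
qed

end

(* The identity outside quotV, again as map_aut demands. *)
definition quot_induced ::
  "(int \<times> int \<Rightarrow> int \<times> int) set \<Rightarrow> (int \<times> int \<Rightarrow> int \<times> int) \<Rightarrow> (int \<times> int) set \<Rightarrow> (int \<times> int) set"
  where "quot_induced \<Gamma> \<phi> X = (if X \<in> quotV \<Gamma> then \<phi> ` X else X)"

lemma quot_induced_orbit:
  "p \<in> KV \<Longrightarrow> \<phi> ` aut_orbit \<Gamma> p = aut_orbit \<Gamma> (\<phi> p) \<Longrightarrow>
    quot_induced \<Gamma> \<phi> (aut_orbit \<Gamma> p) = aut_orbit \<Gamma> (\<phi> p)"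
  by (simp add: quot_induced_def quotV_def)

lemma quot_induced_cells:
  assumes \<chi>: "\<chi> \<in> map_aut Ktiling"
    and compat: "\<And>p. p \<in> KV \<Longrightarrow> \<chi> ` aut_orbit \<Gamma> p = aut_orbit \<Gamma> (\<chi> p)"
  shows "X \<in> quotV \<Gamma> \<Longrightarrow> quot_induced \<Gamma> \<chi> X \<in> quotV \<Gamma>"
    and "s \<in> quotE \<Gamma> \<Longrightarrow> quot_induced \<Gamma> \<chi> ` s \<in> quotE \<Gamma>"
    and "s \<in> quotF \<Gamma> \<Longrightarrow> quot_induced \<Gamma> \<chi> ` s \<in> quotF \<Gamma>"
proof -
  have \<chi>': "\<chi> \<in> map_aut (KV, KE, KF)" using \<chi> by (simp add: Ktiling_def)
  have vertex: "quot_induced \<Gamma> \<chi> (aut_orbit \<Gamma> p) = aut_orbit \<Gamma> (\<chi> p)" if "p \<in> KV" for p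
    using quot_induced_orbit[OF that compat[OF that]] .
  have cell: "quot_induced \<Gamma> \<chi> ` aut_orbit \<Gamma> ` S = aut_orbit \<Gamma> ` \<chi> ` S" if "S \<subseteq> KV" for S
  proof -
    have "quot_induced \<Gamma> \<chi> ` aut_orbit \<Gamma> ` S = (\<lambda>p. quot_induced \<Gamma> \<chi> (aut_orbit \<Gamma> p)) ` S"
      by (simp add: image_image)
    also have "\<dots> = (\<lambda>p. aut_orbit \<Gamma> (\<chi> p)) ` S"
      using that vertex by (intro image_cong) auto
    finally show ?thesis by (simp add: image_image)
  qed
  show "X \<in> quotV \<Gamma> \<Longrightarrow> quot_induced \<Gamma> \<chi> X \<in> quotV \<Gamma>"
    using vertex map_aut_vertex[OF \<chi>'] by (auto simp: quotV_def)
  show "s \<in> quotE \<Gamma> \<Longrightarrow> quot_induced \<Gamma> \<chi> ` s \<in> quotE \<Gamma>"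
  proof -
    assume "s \<in> quotE \<Gamma>"
    then obtain e where "e \<in> KE" "s = aut_orbit \<Gamma> ` e" by (auto simp: quotE_def)
    moreover from this have "\<chi> ` e \<in> KE" using map_aut_edges[OF \<chi>'] by blast
    ultimately show ?thesis unfolding quotE_def using cell[OF KE_subset_KV] by blast
  qed
  show "s \<in> quotF \<Gamma> \<Longrightarrow> quot_induced \<Gamma> \<chi> ` s \<in> quotF \<Gamma>"
  proof -
    assume "s \<in> quotF \<Gamma>"
    then obtain F where "F \<in> KF" "s = aut_orbit \<Gamma> ` F" by (auto simp: quotF_def)
    moreover from this have "\<chi> ` F \<in> KF" using map_aut_faces[OF \<chi>'] by blast
    ultimately show ?thesis unfolding quotF_def using cell[OF KF_subset_KV] by blast
  qed
qed

lemma quot_induced_aut: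
  assumes \<phi>: "\<phi> \<in> map_aut Ktiling" and \<psi>: "\<psi> \<in> map_aut Ktiling"
    and inverse: "\<And>p. \<psi> (\<phi> p) = p" "\<And>p. \<phi> (\<psi> p) = p"
    and compat: "\<And>p. p \<in> KV \<Longrightarrow> \<phi> ` aut_orbit \<Gamma> p = aut_orbit \<Gamma> (\<phi> p)"
      "\<And>p. p \<in> KV \<Longrightarrow> \<psi> ` aut_orbit \<Gamma> p = aut_orbit \<Gamma> (\<psi> p)"
  shows "quot_induced \<Gamma> \<phi> \<in> map_aut (quot_map \<Gamma>)"
proof -
  have inverse_on_quotient: "quot_induced \<Gamma> \<chi> (quot_induced \<Gamma> \<chi>' X) = X"
    if "\<chi>' \<in> map_aut Ktiling" "\<And>p. \<chi> (\<chi>' p) = p"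
      "\<And>p. p \<in> KV \<Longrightarrow> \<chi> ` aut_orbit \<Gamma> p = aut_orbit \<Gamma> (\<chi> p)"
      "\<And>p. p \<in> KV \<Longrightarrow> \<chi>' ` aut_orbit \<Gamma> p = aut_orbit \<Gamma> (\<chi>' p)" for \<chi> \<chi>' X
  proof (cases "X \<in> quotV \<Gamma>")
    case True
    then obtain p where "p \<in> KV" "X = aut_orbit \<Gamma> p" by (auto simp: quotV_def)
    moreover from this have "\<chi>' p \<in> KV" using that(1) by (simp add: Ktiling_def map_aut_vertex)
    ultimately show ?thesis using that(2-4) by (simp add: quot_induced_orbit)
  qed (simp add: quot_induced_def)
  show ?thesis
    unfolding quot_map_def
    by (rule map_aut_by_inverse[where g = "quot_induced \<Gamma> \<psi>"])
       (simp_all add: quot_induced_cells[OF \<phi> compat(1)] quot_induced_cells[OF \<psi> compat(2)]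
         inverse_on_quotient \<phi> \<psi> inverse compat, simp add: quot_induced_def)
qed

abbreviation quot_aut_class :: "(int \<times> int \<Rightarrow> int \<times> int) set \<Rightarrow> int \<times> int \<Rightarrow> (int \<times> int) set set"
  where "quot_aut_class \<Gamma> p \<equiv> aut_orbit (map_aut (quot_map \<Gamma>)) (aut_orbit \<Gamma> p)"

context
  fixes \<Gamma> :: "(int \<times> int \<Rightarrow> int \<times> int) set"
  assumes \<Gamma>: "translation_group \<Gamma>"
begin

lemma transl_orbit_compat:
  assumes t: "hex_center t" and p: "p \<in> KV"
  shows "transl t ` aut_orbit \<Gamma> p = aut_orbit \<Gamma> (transl t p)"
proof -
  have "transl t (p + s) = (p + t) + s" if "s \<in> transl_lattice \<Gamma>" for s
    using that p transl_lattice_hex_center[OF \<Gamma>]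
    by (simp add: transl_def KV_translate_iff ac_simps)
  then have "transl t ` (\<lambda>s. p + s) ` transl_lattice \<Gamma> = (\<lambda>s. (p + t) + s) ` transl_lattice \<Gamma>"
    by (simp add: image_image cong: image_cong)
  moreover have "p + t \<in> KV" using p t by (simp add: KV_translate_iff)
  ultimately show ?thesis
    using p by (simp add: orbit_eq_transl_lattice[OF \<Gamma>] transl_def)
qed

lemma half_turn_orbit_compat:
  assumes p: "p \<in> KV"
  shows "half_turn 0 ` aut_orbit \<Gamma> p = aut_orbit \<Gamma> (half_turn 0 p)"
proof -
  have "uminus ` transl_lattice \<Gamma> = transl_lattice \<Gamma>"
    using transl_lattice_uminus[OF \<Gamma>] by (force simp: image_iff)
  moreover have "half_turn 0 ` (\<lambda>s. p + s) ` transl_lattice \<Gamma> =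
      (\<lambda>s. - p + s) ` uminus ` transl_lattice \<Gamma>"
  proof -
    have "half_turn 0 (p + s) = - p + - s" if "s \<in> transl_lattice \<Gamma>" for s
      using that p transl_lattice_hex_center[OF \<Gamma>] by (simp add: half_turn_def KV_translate_iff)
    then have "(\<lambda>s. half_turn 0 (p + s)) ` transl_lattice \<Gamma> = (\<lambda>s. - p + - s) ` transl_lattice \<Gamma>"
      by (rule image_cong[OF refl])
    then show ?thesis by (simp only: image_image)
  qed
  moreover have "- p \<in> KV" using p KV_half_turn_iff[of 0 p] by (simp add: hex_center_def)
  ultimately show ?thesis
    using p by (simp add: orbit_eq_transl_lattice[OF \<Gamma>] half_turn_def)
qed

lemma quot_orbit_transl:
  assumes t: "hex_center t" and q: "q \<in> KV"
  shows "quot_aut_class \<Gamma> (transl t q) = quot_aut_class \<Gamma> q"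
proof -
  have t': "hex_center (- t)" using t by simp
  have compat: "\<And>s p. hex_center s \<Longrightarrow> p \<in> KV \<Longrightarrow>
      quot_induced \<Gamma> (transl s) (aut_orbit \<Gamma> p) = aut_orbit \<Gamma> (transl s p)"
    by (simp add: quot_induced_orbit transl_orbit_compat)
  have aut: "quot_induced \<Gamma> (transl s) \<in> map_aut (quotV \<Gamma>, quotE \<Gamma>, quotF \<Gamma>)" if "hex_center s" for s
    using quot_induced_aut[OF transl_aut[OF that] transl_aut[of "- s"]] that
      transl_inverse[OF that] transl_inverse[of "- s"] transl_orbit_compat[OF that]
      transl_orbit_compat[of "- s"]
    by (simp add: quot_map_def)
  have "transl (- t) (transl t q) = q" using transl_inverse[of "- t" q] t by simp
  moreover have "transl t q \<in> KV" using q t by (simp add: transl_def KV_translate_iff)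
  ultimately have "quot_induced \<Gamma> (transl (- t)) (quot_induced \<Gamma> (transl t) (aut_orbit \<Gamma> q)) =
      aut_orbit \<Gamma> q"
    using compat t t' q by simp
  then have "aut_orbit (map_aut (quotV \<Gamma>, quotE \<Gamma>, quotF \<Gamma>)) (quot_induced \<Gamma> (transl t) (aut_orbit \<Gamma> q))
      = aut_orbit (map_aut (quotV \<Gamma>, quotE \<Gamma>, quotF \<Gamma>)) (aut_orbit \<Gamma> q)"
    by (rule aut_orbit_map_aut_shift[OF aut[OF t] aut[OF t']])
  then show ?thesis using compat[OF t q] by (simp add: quot_map_def)
qed

lemma quot_orbit_half_turn:
  assumes q: "q \<in> KV"
  shows "quot_aut_class \<Gamma> (half_turn 0 q) = quot_aut_class \<Gamma> q"
proof -
  have h0: "hex_center 0" by (simp add: hex_center_def)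
  have compat: "quot_induced \<Gamma> (half_turn 0) (aut_orbit \<Gamma> p) = aut_orbit \<Gamma> (half_turn 0 p)"
    if "p \<in> KV" for p
    using that by (simp add: quot_induced_orbit half_turn_orbit_compat)
  have aut: "quot_induced \<Gamma> (half_turn 0) \<in> map_aut (quotV \<Gamma>, quotE \<Gamma>, quotF \<Gamma>)"
    using quot_induced_aut[OF half_turn_aut[OF h0] half_turn_aut[OF h0]]
      half_turn_involution[OF h0] half_turn_orbit_compat
    by (simp add: quot_map_def)
  have "half_turn 0 q \<in> KV" using q KV_half_turn_iff[OF h0, of q] by (simp add: half_turn_def)
  then have "quot_induced \<Gamma> (half_turn 0) (quot_induced \<Gamma> (half_turn 0) (aut_orbit \<Gamma> q)) =
      aut_orbit \<Gamma> q"
    using compat q half_turn_involution[OF h0] by simp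
  then have "aut_orbit (map_aut (quotV \<Gamma>, quotE \<Gamma>, quotF \<Gamma>))
      (quot_induced \<Gamma> (half_turn 0) (aut_orbit \<Gamma> q))
      = aut_orbit (map_aut (quotV \<Gamma>, quotE \<Gamma>, quotF \<Gamma>)) (aut_orbit \<Gamma> q)"
    by (rule aut_orbit_map_aut_shift[OF aut aut])
  then show ?thesis using compat[OF q] by (simp add: quot_map_def)
qed

end

section \<open>The two vertex orbits of the quotient\<close>

lemma unit_diff_hex_center:
  assumes "tri_adj p q" "tri_adj p r" "hex_center (q - r)"
  shows "q = r \<or> q - r \<in> {(1,1), (-1,-1), (2,-2), (-2,2)}"
proof -
  obtain a b where p: "p = (a, b)" by (cases p)
  have "q \<in> hexagon (a, b)" "r \<in> hexagon (a, b)" using assms(1,2) p by (simp_all add: hexagon_def)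
  then show ?thesis
    using assms(3) unfolding hexagon_Pair by (elim insertE emptyE; simp)
qed

lemma tri_adj_diff: "tri_adj p q \<longleftrightarrow> q - p \<in> {(1,0), (0,1), (-1,1), (-1,0), (0,-1), (1,-1)}"
  by (cases p, cases q) (simp add: tri_adj_def)

lemma tri_adj_not_hex_center: "tri_adj p q \<Longrightarrow> \<not> hex_center (q - p)"
  unfolding tri_adj_diff by (elim insertE emptyE) simp_all

lemma triangle_vertices_adjacent:
  assumes "T \<in> KF" "card T = 3" "x \<in> T" "y \<in> T" "x \<noteq> y"
  shows "tri_adj x y"
proof -
  obtain a b where "T = up_tri a b \<or> T = down_tri a b" using assms(1,2) by (rule KF_triangle_cases)
  then have "x \<in> up_tri a b \<and> y \<in> up_tri a b \<or> x \<in> down_tri a b \<and> y \<in> down_tri a b"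
    using assms(3,4) by blast
  then show ?thesis
    using assms(5) unfolding up_tri_def down_tri_def
    by (elim disjE conjE insertE emptyE; simp add: tri_adj_def)
qed

lemma triangles_at_type3636_edge:
  assumes "type3636 p" "p \<noteq> q"
    and "T1 \<in> KF" "card T1 = 3" "p \<in> T1" "q \<in> T1" and "T2 \<in> KF" "card T2 = 3" "p \<in> T2" "q \<in> T2"
  shows "T1 = T2"
proof -
  obtain x y where p: "p = (x, y)" by (cases p)
  have triangles: "T = up_tri x y \<or> T = down_tri (x - 1) (y - 1)" if T: "T \<in> KF" "card T = 3" "p \<in> T" for T
  proof -
    obtain a b where "type3636 (a, b)" "T = up_tri a b \<or> T = down_tri a b"
      using T(1,2) by (rule KF_triangle_cases)
    then show ?thesis
      using T(3) assms(1) type3636_vertex_of_up_tri type3636_vertex_of_down_tri p by fastforce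
  qed
  have "q \<notin> up_tri x y \<inter> down_tri (x - 1) (y - 1)"
    using assms(2) p by (auto simp: up_tri_def down_tri_def)
  then show ?thesis
    using triangles[OF assms(3-5)] triangles[OF assms(7-9)] assms(6,10) by blast
qed

context
  fixes \<Gamma> :: "(int \<times> int \<Rightarrow> int \<times> int) set"
  assumes \<Gamma>: "translation_group \<Gamma>"
    and inj_faces: "\<And>F. F \<in> KF \<Longrightarrow> inj_on (aut_orbit \<Gamma>) F"
begin

lemma face_diff_notin_transl_lattice:
  assumes "F \<in> KF" "p \<in> F" "q \<in> F" "p \<noteq> q"
  shows "q - p \<notin> transl_lattice \<Gamma>"
  using assms inj_faces[OF assms(1)] orbit_eq_iff_lattice[OF \<Gamma>] KF_subset_KV by (metis inj_onD subsetD)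

lemma short_vectors_notin_transl_lattice:
  "d \<in> {(1,1), (-1,-1), (2,-2), (-2,2)} \<Longrightarrow> d \<notin> transl_lattice \<Gamma>"
proof -
  have "hexagon (0, 0) \<in> KF" by (simp add: hexagon_KF hex_center_def)
  then have "p \<in> hexagon (0, 0) \<Longrightarrow> q \<in> hexagon (0, 0) \<Longrightarrow> p \<noteq> q \<Longrightarrow> q - p \<notin> transl_lattice \<Gamma>"
    for p q by (rule face_diff_notin_transl_lattice)
  from this[of "(0,-1)" "(1,0)"] this[of "(1,0)" "(0,-1)"]
    this[of "(-1,1)" "(1,-1)"] this[of "(1,-1)" "(-1,1)"]
  show "d \<in> {(1,1), (-1,-1), (2,-2), (-2,2)} \<Longrightarrow> d \<notin> transl_lattice \<Gamma>"
    by (auto simp: hexagon_Pair)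
qed

lemma adjacent_diff_notin_transl_lattice: "tri_adj p q \<Longrightarrow> q - p \<notin> transl_lattice \<Gamma>"
  using transl_lattice_hex_center[OF \<Gamma>] tri_adj_not_hex_center by blast

lemma common_neighbour_eq:
  assumes "tri_adj p q" "tri_adj p r" "q - r \<in> transl_lattice \<Gamma>"
  shows "q = r"
  using unit_diff_hex_center[OF assms(1,2) transl_lattice_hex_center[OF \<Gamma> assms(3)]]
    short_vectors_notin_transl_lattice assms(3) by blast

lemma quot_triangle_lift:
  assumes T: "T \<in> KF" "card T = 3" and pq: "tri_adj p q" "p \<in> KV" "q \<in> KV"
    and orbits: "aut_orbit \<Gamma> p \<in> aut_orbit \<Gamma> ` T" "aut_orbit \<Gamma> q \<in> aut_orbit \<Gamma> ` T"
  obtains T' where "T' \<in> KF" "card T' = 3" "aut_orbit \<Gamma> ` T' = aut_orbit \<Gamma> ` T" "p \<in> T'" "q \<in> T'"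
proof -
  obtain p1 where p1: "p1 \<in> T" "aut_orbit \<Gamma> p1 = aut_orbit \<Gamma> p" using orbits(1) by auto
  have "p1 \<in> KV" using p1(1) KF_subset_KV[OF T(1)] by blast
  then have s: "p - p1 \<in> transl_lattice \<Gamma>" using orbit_eq_iff_lattice[OF \<Gamma> _ pq(2)] p1(2) by simp
  then have hs: "hex_center (p - p1)" by (rule transl_lattice_hex_center[OF \<Gamma>])
  let ?T = "(\<lambda>x. x + (p - p1)) ` T"
  have T': "?T \<in> KF" using KF_translate[OF hs T(1)] .
  moreover have card: "card ?T = 3" using T(2) by (simp add: card_image inj_on_def)
  moreover have same_orbits: "aut_orbit \<Gamma> ` ?T = aut_orbit \<Gamma> ` T"
  proof -
    have "aut_orbit \<Gamma> (x + (p - p1)) = aut_orbit \<Gamma> x" if "x \<in> T" for x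
      using that KF_subset_KV[OF T(1)] orbit_eq_iff_lattice[OF \<Gamma>, of x "x + (p - p1)"] s
        KV_translate_iff[OF hs] by auto
    then show ?thesis by (simp add: image_image cong: image_cong)
  qed
  moreover have "p \<in> ?T" using p1(1) by (intro image_eqI[of _ _ p1]) simp_all
  moreover have "q \<in> ?T"
  proof -
    obtain q1 where q1: "q1 \<in> ?T" "aut_orbit \<Gamma> q1 = aut_orbit \<Gamma> q"
      using orbits(2) same_orbits by (metis imageE)
    have "q1 \<in> KV" using q1(1) KF_subset_KV[OF T'] by blast
    have "q1 \<noteq> p"
      using q1(2) orbit_eq_iff_lattice[OF \<Gamma> pq(2,3)] adjacent_diff_notin_transl_lattice[OF pq(1)] by auto
    then have "tri_adj p q1" using triangle_vertices_adjacent[OF T' card \<open>p \<in> ?T\<close> q1(1)] by blast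
    moreover have "q - q1 \<in> transl_lattice \<Gamma>"
      using orbit_eq_iff_lattice[OF \<Gamma> \<open>q1 \<in> KV\<close> pq(3)] q1(2) by simp
    ultimately have "q = q1" using common_neighbour_eq[OF pq(1)] by blast
    then show ?thesis using q1(1) by simp
  qed
  ultimately show ?thesis by (rule that)
qed

lemma quot_on_edge_of_two_triangles: "on_edge_of_two_triangles (quot_map \<Gamma>) (aut_orbit \<Gamma> (1, 0))"
proof -
  let ?o = "aut_orbit \<Gamma>"
  have "{(1, 0), (2, -1)} \<in> KE" by (simp add: doubleton_in_KE_iff tri_adj_def)
  have ne: "?o ` up_tri 1 (-1) \<noteq> ?o ` down_tri 1 (-1)"
  proof
    assume "?o ` up_tri 1 (-1) = ?o ` down_tri 1 (-1)"
    moreover have "?o (1, -1) \<in> ?o ` up_tri 1 (-1)" by (simp add: up_tri_def)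
    ultimately obtain x where x: "x \<in> down_tri 1 (-1)" "?o x = ?o (1, -1)" by (metis imageE)
    then have "(1, -1) - x \<in> transl_lattice \<Gamma>"
      using orbit_eq_iff_lattice[OF \<Gamma>, of x "(1, -1)"] KF_subset_KV[OF faces_near_origin(2)] by auto
    moreover have "x \<in> {(2, -1), (1, 0), (2, 0)}" using x(1) by (simp add: down_tri_def)
    ultimately show False
      using adjacent_diff_notin_transl_lattice[of "(2, -1)" "(1, -1)"]
        adjacent_diff_notin_transl_lattice[of "(1, 0)" "(1, -1)"]
        short_vectors_notin_transl_lattice[of "(-1, -1)"]
      by (auto simp: tri_adj_def)
  qed
  have card: "card (?o ` up_tri 1 (-1)) = 3" "card (?o ` down_tri 1 (-1)) = 3"
    using inj_faces faces_near_origin(1,2) by (simp_all add: card_image)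
  have edge: "?o ` {(1, 0), (2, -1)} \<in> quotE \<Gamma>"
    unfolding quotE_def using \<open>{(1, 0), (2, -1)} \<in> KE\<close> by (rule imageI)
  have faces: "?o ` up_tri 1 (-1) \<in> quotF \<Gamma>" "?o ` down_tri 1 (-1) \<in> quotF \<Gamma>"
    unfolding quotF_def by (rule imageI, rule faces_near_origin)+
  have sub: "?o ` {(1, 0), (2, -1)} \<subseteq> ?o ` up_tri 1 (-1)"
    "?o ` {(1, 0), (2, -1)} \<subseteq> ?o ` down_tri 1 (-1)"
    by (simp_all add: up_tri_def down_tri_def)
  have "?o (1, 0) \<in> ?o ` {(1, 0), (2, -1)}" by simp
  then show ?thesis
    unfolding quot_map_def by (rule on_edge_of_two_trianglesI[OF edge _ faces ne card sub])
qed

lemma quot_not_on_edge_of_two_triangles: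
  assumes "type3636 p"
  shows "\<not> on_edge_of_two_triangles (quot_map \<Gamma>) (aut_orbit \<Gamma> p)"
proof
  let ?o = "aut_orbit \<Gamma>"
  assume "on_edge_of_two_triangles (quot_map \<Gamma>) (?o p)"
  then obtain E T1 T2 where E: "E \<in> quotE \<Gamma>" "?o p \<in> E"
    and T: "T1 \<in> quotF \<Gamma>" "T2 \<in> quotF \<Gamma>" "T1 \<noteq> T2" "card T1 = 3" "card T2 = 3" "E \<subseteq> T1" "E \<subseteq> T2"
    unfolding quot_map_def by (rule on_edge_of_two_trianglesE)
  obtain e where e: "e \<in> KE" "E = ?o ` e" using E(1) by (auto simp: quotE_def)
  then obtain p' where "p' \<in> e" "?o p' = ?o p" using E(2) by auto
  then obtain q where pq: "e = {p', q}" "p' \<in> KV" "q \<in> KV" "tri_adj p' q"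
    using e(1) by (elim KE_at_vertex)
  have "p \<in> KV" using assms by (cases p) (simp add: type3636_def)
  then have "p' - p \<in> transl_lattice \<Gamma>" using orbit_eq_iff_lattice[OF \<Gamma> _ pq(2)] \<open>?o p' = ?o p\<close> by metis
  then have "type3636 (p + (p' - p))"
    using assms type3636_add transl_lattice_hex_center[OF \<Gamma>] by blast
  then have "type3636 p'" by simp
  obtain t1 t2 where t: "t1 \<in> KF" "T1 = ?o ` t1" "t2 \<in> KF" "T2 = ?o ` t2"
    using T(1,2) by (auto simp: quotF_def)
  have "card t1 = 3" "card t2 = 3" using T(4,5) t inj_faces by (simp_all add: card_image)
  moreover have "?o p' \<in> ?o ` t1" "?o q \<in> ?o ` t1" "?o p' \<in> ?o ` t2" "?o q \<in> ?o ` t2"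
    using T(6,7) e(2) pq(1) t by auto
  ultimately obtain s1 s2 where "s1 \<in> KF" "card s1 = 3" "?o ` s1 = T1" "p' \<in> s1" "q \<in> s1"
    and "s2 \<in> KF" "card s2 = 3" "?o ` s2 = T2" "p' \<in> s2" "q \<in> s2"
    using quot_triangle_lift[OF t(1) _ pq(4,2,3)] quot_triangle_lift[OF t(3) _ pq(4,2,3)] t by metis
  moreover have "p' \<noteq> q" using pq(4) tri_adj_irrefl by blast
  ultimately have "s1 = s2" using triangles_at_type3636_edge[OF \<open>type3636 p'\<close>] by blast
  then show False using T(3) \<open>?o ` s1 = T1\<close> \<open>?o ` s2 = T2\<close> by simp
qed

lemma quot_vertex_orbit_cases:
  assumes "p \<in> KV"
  shows "quot_aut_class \<Gamma> p = quot_aut_class \<Gamma> (1, 0)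
    \<or> quot_aut_class \<Gamma> p = quot_aut_class \<Gamma> (2, 0)"
proof -
  obtain a b where p: "p = (a, b)" by (cases p)
  then have "(a - b) mod 4 = 1 \<or> (a - b) mod 4 = 2 \<or> (a - b) mod 4 = 3"
    using assms by simp presburger
  then show ?thesis
  proof (elim disjE)
    assume "(a - b) mod 4 = 1"
    then have "hex_center (a - 1, b)" by simp presburger
    moreover have "transl (a - 1, b) (1, 0) = p" by (simp add: p transl_def)
    ultimately show ?thesis using quot_orbit_transl[OF \<Gamma>, of "(a - 1, b)" "(1, 0)"] by simp
  next
    assume "(a - b) mod 4 = 2"
    then have "hex_center (a - 2, b)" by simp presburger
    moreover have "transl (a - 2, b) (2, 0) = p" by (simp add: p transl_def)
    ultimately show ?thesis using quot_orbit_transl[OF \<Gamma>, of "(a - 2, b)" "(2, 0)"] by simp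
  next
    assume "(a - b) mod 4 = 3"
    then have "hex_center (a + 1, b)" by simp presburger
    moreover have "transl (a + 1, b) (half_turn 0 (1, 0)) = p" by (simp add: p transl_def half_turn_def)
    ultimately show ?thesis
      using quot_orbit_transl[OF \<Gamma>, of "(a + 1, b)" "half_turn 0 (1, 0)"]
        quot_orbit_half_turn[OF \<Gamma>, of "(1, 0)"] by (simp add: half_turn_def)
  qed
qed

lemma quot_vertex_orbits_distinct:
  "quot_aut_class \<Gamma> (1, 0) \<noteq> quot_aut_class \<Gamma> (2, 0)"
proof
  assume "quot_aut_class \<Gamma> (1, 0) = quot_aut_class \<Gamma> (2, 0)"
  moreover have "aut_orbit \<Gamma> (2, 0) \<in> quot_aut_class \<Gamma> (2, 0)"
    unfolding aut_orbit_def[of "map_aut _"] quot_map_def using map_aut_id by (metis id_apply image_eqI)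
  ultimately have "aut_orbit \<Gamma> (2, 0) \<in> quot_aut_class \<Gamma> (1, 0)" by simp
  then obtain f where "f \<in> map_aut (quot_map \<Gamma>)" "aut_orbit \<Gamma> (2, 0) = f (aut_orbit \<Gamma> (1, 0))"
    unfolding aut_orbit_def[of "map_aut _"] by blast
  then have "on_edge_of_two_triangles (quot_map \<Gamma>) (aut_orbit \<Gamma> (2, 0))"
    using map_aut_on_edge_of_two_triangles quot_on_edge_of_two_triangles
    unfolding quot_map_def by metis
  then show False using quot_not_on_edge_of_two_triangles[of "(2, 0)"] by (simp add: type3636_def)
qed

lemma quot_vertex_orbits_card: "card (aut_orbit (map_aut (quot_map \<Gamma>)) ` quotV \<Gamma>) = 2"
proof -
  have "aut_orbit (map_aut (quot_map \<Gamma>)) ` quotV \<Gamma> =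
      {quot_aut_class \<Gamma> (1, 0), quot_aut_class \<Gamma> (2, 0)}"
    using quot_vertex_orbit_cases by (auto simp: quotV_def)
  then show ?thesis using quot_vertex_orbits_distinct by simp
qed

end

theorem theorem1:
  fixes \<Gamma> :: "(int \<times> int \<Rightarrow> int \<times> int) set"
  assumes "is_subgroup_aut \<Gamma>"
    and "acts_freely \<Gamma>"
    and "quotient_is_torus \<Gamma>"
    and "quotient_polyhedral \<Gamma>"
  shows "card (aut_orbit (map_aut (quot_map \<Gamma>)) ` quotV \<Gamma>) = 2"
proof -
  have "translation_group \<Gamma>"
    using assms(1-3) by (rule translation_group_if_free_torus)
  moreover have "\<And>F. F \<in> KF \<Longrightarrow> inj_on (aut_orbit \<Gamma>) F"
    using assms(4) by (simp add: quotient_polyhedral_def)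
  ultimately show ?thesis by (rule quot_vertex_orbits_card)
qed

end
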